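(* Let $N_r\ge N_t\ge 2$, let $\mathbf{H}\in\mathbb{C}^{N_r\times N_t}$, and let $E_s,N_0>0$. Form the augmented matrix $$\mathbf{H}_{\mathrm a}=\begin{bmatrix}\tfrac{1}{\sqrt{N_0}}\mathbf{H}\\ \tfrac{1}{\sqrt{E_s}}\mathbf{I}_{N_t}\end{bmatrix}\in\mathbb{C}^{(N_r+N_t)\times N_t}$$ and let $\mathbf{H}_{\mathrm a}=\mathbf{Q}_{\mathrm a}\mathbf{L}_{\mathrm a}$ be its thin QL decomposition. Fix $1\le\nu\le N_t-1$ and partition $$\mathbf{L}_{\mathrm a}=\begin{bmatrix}\mathbf{P}_{\mathrm a}&\mathbf{0}\\ \mathbf{R}_{\mathrm a}&\mathbf{S}_{\mathrm a}\end{bmatrix},$$ with $\mathbf{P}_{\mathrm a}\in\mathbb{C}^{\nu\times\nu}$ and $\mathbf{S}_{\mathrm a}\in\mathbb{C}^{(N_t-\nu)\times(N_t-\nu)}$. Define $$\boldsymbol{\Sigma}_{\mathrm a}=\operatorname{diag}(\mathbf{S}_{\mathrm a}^{-1}\mathbf{S}_{\mathrm a}^{-\dagger})^{-1/2},\qquad \mathbf{W}_{\mathrm{ap}}=\begin{bmatrix}\mathbf{I}_\nu&\mathbf{0}\\ \mathbf{0}&\boldsymbol{\Sigma}_{\mathrm a}\mathbf{S}_{\mathrm a}^{-1}\end{bmatrix},\qquad \mathbf{L}_{\mathrm{ap}}=\mathbf{W}_{\mathrm{ap}}\mathbf{L}_{\mathrm a}.$$ Let $\alpha=N_0/E_s$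 and $$\mathbf{W}_{\mathrm{MMSE}}=(\mathbf{H}^\dagger\mathbf{H}+\alpha\mathbf{I}_{N_t})^{-1}\mathbf{H}^\dagger,\qquad \mathbf{G}_{\mathrm{ap}}=\mathbf{L}_{\mathrm{ap}}^\dagger\mathbf{L}_{\mathrm{ap}},\qquad \mathbf{F}_{\mathrm{ap}}=\mathbf{W}_{\mathrm{MMSE}}^\dagger\mathbf{G}_{\mathrm{ap}}.$$ Define the detection model $$p_{\mathrm{ap}}(\mathbf{y}|\mathbf{x})=\exp\big(2\,\mathrm{Re}\{\mathbf{y}^\dagger\mathbf{F}_{\mathrm{ap}}\mathbf{x}\}-\mathbf{x}^\dagger\mathbf{G}_{\mathrm{ap}}\mathbf{x}+\tfrac{1}{E_s}\mathbf{x}^\dagger\mathbf{x}\big)$$ together with $$p_{\mathrm{ap}}(\mathbf{y})=\int_{\mathbb{C}^{N_t}}p_{\mathrm{ap}}(\mathbf{y}|\mathbf{x})\,p(\mathbf{x})\,d\mathbf{x}.$$ Assume $\mathbf{x}\sim\mathcal{CN}(\mathbf{0},E_s\mathbf{I}_{N_t})$ with density $p(\mathbf{x})$, and let $\mathbf{y}=\mathbf{H}\mathbf{x}+\mathbf{z}$ with $\mathbf{z}\sim\mathcal{CN}(\mathbf{0},N_0\mathbf{I}_{N_r})$ independent of $\mathbf{x}$. Then the lower bound on the achievable information rate of the augmented WLD detector, $$I_{\mathrm{LB}}^{\mathrm{AWLD}}=\mathbb{E}_{\mathbf{Y},\mathbf{X}}[\log p_{\mathrm{ap}}(\mathbf{y}|\mathbf{x})]-\mathbb{E}_{\mathbf{Y}}[\log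 p_{\mathrm{ap}}(\mathbf{y})],$$ in which the expectations are taken with respect to the true joint distribution of $(\mathbf{x},\mathbf{y})$, equals $$I_{\mathrm{LB}}^{\mathrm{AWLD}}=N_t\log E_s+\log\det\big(\mathbf{L}_{\mathrm{ap}}^\dagger\mathbf{L}_{\mathrm{ap}}\big).$$
   Context: The thin QL decomposition $\mathbf{H}_{\mathrm a}=\mathbf{Q}_{\mathrm a}\mathbf{L}_{\mathrm a}$ means that $\mathbf{Q}_{\mathrm a}\in\mathbb{C}^{(N_r+N_t)\times N_t}$ has orthonormal columns and $\mathbf{L}_{\mathrm a}\in\mathbb{C}^{N_t\times N_t}$ is lower triangular with real positive diagonal entries. Such a decomposition exists since $\mathbf{H}_{\mathrm a}$ always has full column rank. For a square matrix $\mathbf{A}$, $\operatorname{diag}(\mathbf{A})$ denotes the diagonal matrix having the same diagonal entries as $\mathbf{A}$. The superscript $\dagger$ denotes conjugate transpose, and $\log$ is the natural logarithm. *)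

theory Defs
  imports "HOL-Analysis.Analysis"
    "Jordan_Normal_Form.Schur_Decomposition"
    "Jordan_Normal_Form.Gauss_Jordan_Elimination"
begin

text \<open>Vectors in C^n are represented, for integration, as functions nat => complex
  on the index set {..<n}, with the Lebesgue measure on C^n given by the product
  of the Lebesgue (Borel) measures on C = R^2.\<close>

definition cvec_measure :: "nat \<Rightarrow> (nat \<Rightarrow> complex) measure" where
  "cvec_measure n = PiM {..<n} (\<lambda>_. (lborel :: complex measure))"

definition cgauss_density :: "nat \<Rightarrow> real \<Rightarrow> (nat \<Rightarrow> complex) \<Rightarrow> real" where
  "cgauss_density n s f = exp (- (\<Sum>i<n. (cmod (f i))\<^sup>2) / s) / (pi * s) ^ n"

definition minv :: "complex mat \<Rightarrow> complex mat" where
  "minv A = the (mat_inverse A)"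

definition aug_mat :: "complex mat \<Rightarrow> real \<Rightarrow> real \<Rightarrow> nat \<Rightarrow> nat \<Rightarrow> complex mat" where
  "aug_mat H N0 Es nr nt = mat (nr + nt) nt (\<lambda>(i,j).
     if i < nr then H $$ (i,j) / complex_of_real (sqrt N0)
     else if i - nr = j then 1 / complex_of_real (sqrt Es) else 0)"

definition lr_block :: "complex mat \<Rightarrow> nat \<Rightarrow> nat \<Rightarrow> complex mat" where
  "lr_block L nt \<nu> = mat (nt - \<nu>) (nt - \<nu>) (\<lambda>(i,j). L $$ (i + \<nu>, j + \<nu>))"

text \<open>Sigma_a = diag(S^{-1} S^{-dagger})^{-1/2}; the diagonal entries of
  S^{-1} S^{-dagger} are positive reals.\<close>
definition Sigma_a :: "complex mat \<Rightarrow> complex mat" where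
  "Sigma_a S = (let M = minv S * mat_adjoint (minv S) in
     mat (dim_row S) (dim_row S) (\<lambda>(i,j).
       if i = j then complex_of_real (1 / sqrt (Re (M $$ (i,i)))) else 0))"

definition W_ap :: "complex mat \<Rightarrow> nat \<Rightarrow> nat \<Rightarrow> complex mat" where
  "W_ap L nt \<nu> = (let S = lr_block L nt \<nu> in
     four_block_mat (1\<^sub>m \<nu>) (0\<^sub>m \<nu> (nt - \<nu>)) (0\<^sub>m (nt - \<nu>) \<nu>) (Sigma_a S * minv S))"

definition L_ap :: "complex mat \<Rightarrow> nat \<Rightarrow> nat \<Rightarrow> complex mat" where
  "L_ap L nt \<nu> = W_ap L nt \<nu> * L"

definition W_MMSE :: "complex mat \<Rightarrow> real \<Rightarrow> nat \<Rightarrow> complex mat" where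
  "W_MMSE H \<alpha> nt = minv (mat_adjoint H * H + complex_of_real \<alpha> \<cdot>\<^sub>m 1\<^sub>m nt) * mat_adjoint H"

text \<open>p_ap(y|x) = exp(2 Re{y^dagger F x} - x^dagger G x + x^dagger x / Es)
  (the exponent is real; x^dagger G x and x^dagger x are real since G is Hermitian).\<close>
definition p_ap_cond :: "complex mat \<Rightarrow> complex mat \<Rightarrow> real \<Rightarrow> complex vec \<Rightarrow> complex vec \<Rightarrow> real" where
  "p_ap_cond F G Es y x = exp (2 * Re (conjugate y \<bullet> (F *\<^sub>v x))
      - Re (conjugate x \<bullet> (G *\<^sub>v x)) + Re (conjugate x \<bullet> x) / Es)"

definition p_ap_marg :: "complex mat \<Rightarrow> complex mat \<Rightarrow> real \<Rightarrow> nat \<Rightarrow> complex vec \<Rightarrow> real" where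
  "p_ap_marg F G Es nt y =
     (\<integral>x. p_ap_cond F G Es y (vec nt x) * cgauss_density nt Es x \<partial>cvec_measure nt)"

end

theory Submission
  imports Defs "HOL-Probability.Distributions"
begin

(*
  Write L = L_ap, W = W_MMSE, K = L W and G = L^H L, so that F = W^H G and y^H F x = (K y)^H (L x).
  Then p_ap(y|x) p(x) = exp (|K y|^2 - |L x - K y|^2) / (pi Es)^Nt, and since L is lower triangular
  with nonzero diagonal, integrating out x one coordinate at a time gives
  p_ap(y) = exp |K y|^2 / (Es^Nt det G).  Both log-densities are thus quadratic polynomials in the
  independent Gaussian vectors x and z, whose expectations only involve traces, and the difference
  of the two expectations is Nt log Es + log det G + Nt - (Es |L E|_F^2 + N0 |K|_F^2) with
  E = I - W H.  The last bracket is the whitened MMSE error and equals Nt: with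
  M = H^H H + (N0/Es) I = N0 L_a^H L_a one has Es E E^H + N0 W W^H = N0 M^-1, hence
  Es |L E|_F^2 + N0 |K|_F^2 = N0 tr (L M^-1 L^H) = |W_ap|_F^2, and the normalisation Sigma_a
  gives every row of W_ap unit norm.
*)

section \<open>Matrix preliminaries\<close>

lemma dim_mat_adjoint[simp]:
  "dim_row (mat_adjoint A) = dim_col A" "dim_col (mat_adjoint A) = dim_row A"
  by (simp_all add: mat_adjoint_def)

lemma carrier_mat_adjoint[simp]: "A \<in> carrier_mat n m \<Longrightarrow> mat_adjoint A \<in> carrier_mat m n"
  by (auto intro!: carrier_matI)

lemma index_mat_adjoint[simp]:
  "i < dim_col A \<Longrightarrow> j < dim_row A \<Longrightarrow> mat_adjoint (A :: complex mat) $$ (i,j) = cnj (A $$ (j,i))"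
  by (simp add: mat_adjoint_def mat_of_rows_def)

lemma mat_adjoint_adjoint[simp]: "mat_adjoint (mat_adjoint (A :: complex mat)) = A"
  by (rule eq_matI) auto

lemma mat_adjoint_one[simp]: "mat_adjoint (1\<^sub>m n :: complex mat) = 1\<^sub>m n"
  by (rule eq_matI) auto

lemma mat_adjoint_mult:
  "A \<in> carrier_mat n k \<Longrightarrow> B \<in> carrier_mat k m \<Longrightarrow>
    mat_adjoint (A * B :: complex mat) = mat_adjoint B * mat_adjoint A"
  by (rule eq_matI) (auto simp: scalar_prod_def mult.commute)

lemma mat_adjoint_smult: "mat_adjoint (c \<cdot>\<^sub>m A :: complex mat) = cnj c \<cdot>\<^sub>m mat_adjoint A"
  by (rule eq_matI) auto

lemma cscalar_prod_mult_mat_vec: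
  assumes "A \<in> carrier_mat n m" "u \<in> carrier_vec m" "w \<in> carrier_vec n"
  shows "conjugate (A *\<^sub>v u) \<bullet> w = conjugate u \<bullet> (mat_adjoint A *\<^sub>v (w :: complex vec))"
proof -
  have "conjugate (A *\<^sub>v u) \<bullet> w = (\<Sum>i<n. \<Sum>j<m. cnj (A $$ (i,j)) * cnj (u $ j) * w $ i)"
    using assms by (simp add: scalar_prod_def atLeast0LessThan sum_distrib_right)
  also have "\<dots> = (\<Sum>j<m. \<Sum>i<n. cnj (u $ j) * (cnj (A $$ (i,j)) * w $ i))"
    by (subst sum.swap) (simp add: ac_simps)
  also have "\<dots> = conjugate u \<bullet> (mat_adjoint A *\<^sub>v w)"
    using assms by (simp add: scalar_prod_def atLeast0LessThan sum_distrib_left)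
  finally show ?thesis .
qed

definition mat_trace :: "'a::comm_ring_1 mat \<Rightarrow> 'a" where
  "mat_trace A = (\<Sum>i<dim_row A. A $$ (i,i))"

lemma mat_trace_mult_comm:
  assumes "A \<in> carrier_mat n m" "B \<in> carrier_mat m n"
  shows "mat_trace (A * B) = mat_trace (B * A)"
proof -
  have "mat_trace (A * B) = (\<Sum>i<n. \<Sum>j<m. A $$ (i,j) * B $$ (j,i))"
    using assms by (simp add: mat_trace_def scalar_prod_def atLeast0LessThan)
  also have "\<dots> = (\<Sum>j<m. \<Sum>i<n. B $$ (j,i) * A $$ (i,j))"
    by (subst sum.swap) (simp add: mult.commute)
  also have "\<dots> = mat_trace (B * A)"
    using assms by (simp add: mat_trace_def scalar_prod_def atLeast0LessThan)
  finally show ?thesis .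
qed

lemma mat_trace_add:
  "A \<in> carrier_mat n n \<Longrightarrow> B \<in> carrier_mat n n \<Longrightarrow> mat_trace (A + B) = mat_trace A + mat_trace B"
  by (simp add: mat_trace_def sum.distrib)

lemma mat_trace_smult: "A \<in> carrier_mat n n \<Longrightarrow> mat_trace (c \<cdot>\<^sub>m A) = c * mat_trace A"
  by (simp add: mat_trace_def sum_distrib_left)

lemma mat_trace_one[simp]: "mat_trace (1\<^sub>m n) = of_nat n"
  by (simp add: mat_trace_def)

lemma mat_trace_mult_adjoint:
  "A \<in> carrier_mat n m \<Longrightarrow>
    mat_trace (A * mat_adjoint A) = of_real (\<Sum>i<n. \<Sum>j<m. (cmod (A $$ (i,j)))\<^sup>2)"
  by (simp add: mat_trace_def scalar_prod_def atLeast0LessThan complex_norm_square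
      del: of_real_power)

lemma mat_trace_adjoint_mult:
  "A \<in> carrier_mat n m \<Longrightarrow> B \<in> carrier_mat n m \<Longrightarrow>
    mat_trace (mat_adjoint A * B) = (\<Sum>j<m. \<Sum>i<n. cnj (A $$ (i,j)) * B $$ (i,j))"
  by (simp add: mat_trace_def scalar_prod_def atLeast0LessThan)

lemma Re_mat_trace_adjoint_diff:
  assumes A: "A \<in> carrier_mat n m" and B: "B \<in> carrier_mat n m"
  shows "Re (mat_trace (mat_adjoint (A - B) * (A - B)))
    = Re (mat_trace (mat_adjoint A * A)) - 2 * Re (mat_trace (mat_adjoint B * A))
      + Re (mat_trace (mat_adjoint B * B))"
proof -
  have AB: "A - B \<in> carrier_mat n m" using B by (rule minus_carrier_mat)
  have entry: "Re (cnj (a - b) * (a - b)) = Re (cnj a * a) - 2 * Re (cnj b * a) + Re (cnj b * b)"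
    for a b :: complex
    by (simp add: algebra_simps)
  have "Re (mat_trace (mat_adjoint (A - B) * (A - B)))
      = (\<Sum>j<m. \<Sum>i<n. Re (cnj (A $$ (i,j)) * A $$ (i,j)) - 2 * Re (cnj (B $$ (i,j)) * A $$ (i,j))
          + Re (cnj (B $$ (i,j)) * B $$ (i,j)))"
  proof -
    have "(A - B) $$ (i,j) = A $$ (i,j) - B $$ (i,j)" if "i \<in> {..<n}" "j \<in> {..<m}" for i j
      using that B by simp
    then show ?thesis
      unfolding mat_trace_adjoint_mult[OF AB AB] Re_sum by (intro sum.cong refl) (simp only: entry)
  qed
  also have "\<dots> = Re (mat_trace (mat_adjoint A * A)) - 2 * Re (mat_trace (mat_adjoint B * A))
      + Re (mat_trace (mat_adjoint B * B))"
    unfolding mat_trace_adjoint_mult[OF A A] mat_trace_adjoint_mult[OF B A] mat_trace_adjoint_mult[OF B B] Re_sum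
    by (simp only: sum.distrib sum_subtractf sum_distrib_left)
  finally show ?thesis .
qed

definition sq_norm_cvec :: "complex vec \<Rightarrow> real" where
  "sq_norm_cvec v = (\<Sum>i<dim_vec v. (cmod (v $ i))\<^sup>2)"

lemma of_real_sq_norm_cvec: "of_real (sq_norm_cvec v) = conjugate v \<bullet> v"
  by (simp add: sq_norm_cvec_def scalar_prod_def atLeast0LessThan complex_norm_square
      mult.commute del: of_real_power)

lemma sq_norm_cvec_eq_Re: "sq_norm_cvec v = Re (conjugate v \<bullet> v)"
  by (metis Re_complex_of_real of_real_sq_norm_cvec)

lemma cmod_diff_power2: "(cmod (a - b))\<^sup>2 = (cmod a)\<^sup>2 - 2 * Re (cnj b * a) + (cmod b)\<^sup>2"
  unfolding cmod_power2 by (simp add: power2_eq_square algebra_simps)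

lemma cmod_add_power2: "(cmod (a + b))\<^sup>2 = (cmod a)\<^sup>2 + 2 * Re (cnj b * a) + (cmod b)\<^sup>2"
  unfolding cmod_power2 by (simp add: power2_eq_square algebra_simps)

lemma Re_cscalar_prod:
  "u \<in> carrier_vec n \<Longrightarrow> w \<in> carrier_vec n \<Longrightarrow>
    Re (conjugate w \<bullet> u) = (\<Sum>i<n. Re (cnj (w $ i) * u $ i))"
  unfolding scalar_prod_def atLeast0LessThan Re_sum by (intro sum.cong) auto

lemma sq_norm_cvec_minus:
  assumes "u \<in> carrier_vec n" "w \<in> carrier_vec n"
  shows "sq_norm_cvec (u - w) = sq_norm_cvec u - 2 * Re (conjugate w \<bullet> u) + sq_norm_cvec w"
  using assms
  by (simp add: sq_norm_cvec_def Re_cscalar_prod cmod_diff_power2 sum.distrib sum_subtractf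
      sum_distrib_left)

lemma sq_norm_cvec_add:
  assumes "u \<in> carrier_vec n" "w \<in> carrier_vec n"
  shows "sq_norm_cvec (u + w) = sq_norm_cvec u + 2 * Re (conjugate w \<bullet> u) + sq_norm_cvec w"
  using assms
  by (simp add: sq_norm_cvec_def Re_cscalar_prod cmod_add_power2 sum.distrib sum_distrib_left)

lemma sq_norm_cvec_mult_mat_vec:
  "A \<in> carrier_mat n m \<Longrightarrow> u \<in> carrier_vec m \<Longrightarrow>
    sq_norm_cvec (A *\<^sub>v u) = Re (conjugate u \<bullet> ((mat_adjoint A * A) *\<^sub>v u))"
  by (simp add: sq_norm_cvec_eq_Re cscalar_prod_mult_mat_vec[of A n m] assoc_mult_mat_vec[of _ m n A m])

text \<open>Variants of the \<open>carrier_mat\<close>-based algebra rules of JNF whose side conditions are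
  equations between dimensions: the simplifier can discharge these, so it normalises matrix
  expressions to right-associated products.\<close>

lemma assoc_mult_mat_dims:
  "dim_col A = dim_row B \<Longrightarrow> dim_col B = dim_row C \<Longrightarrow> A * B * C = A * (B * C :: 'a::semiring_0 mat)"
  by (rule assoc_mult_mat[OF carrier_matI carrier_matI carrier_matI]) auto

lemma mult_smult_assoc_mat_dims:
  "dim_col A = dim_row B \<Longrightarrow> (k \<cdot>\<^sub>m A) * B = k \<cdot>\<^sub>m (A * B :: 'a::comm_semiring_0 mat)"
  by (rule eq_matI) (auto simp: scalar_prod_def sum_distrib_left mult.assoc)

lemma mult_smult_distrib_dims:
  "dim_col A = dim_row B \<Longrightarrow> A * (k \<cdot>\<^sub>m B) = k \<cdot>\<^sub>m (A * B :: 'a::comm_semiring_0 mat)"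
  by (rule eq_matI) (auto simp: scalar_prod_def sum_distrib_left mult.left_commute)

lemma mat_adjoint_mult_dims:
  "dim_col A = dim_row B \<Longrightarrow> mat_adjoint (A * B :: complex mat) = mat_adjoint B * mat_adjoint A"
  by (rule mat_adjoint_mult[OF carrier_matI carrier_matI]) auto

lemma mult_right_inverse_cancel:
  assumes AB: "A * B = 1\<^sub>m n" and "dim_col A = dim_row B" "dim_row C = n"
  shows "A * (B * C) = (C :: 'a::semiring_1 mat)"
proof -
  have "dim_col B = n" using arg_cong[OF AB, of dim_col] by simp
  with assms have "(A * B) * C = A * (B * C)" by (intro assoc_mult_mat_dims) simp_all
  with assms show ?thesis by simp
qed

lemma smult_smult_mat: "a \<cdot>\<^sub>m (b \<cdot>\<^sub>m A) = (a * b :: 'a::semigroup_mult) \<cdot>\<^sub>m A"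
  by (rule eq_matI) (auto simp: mult.assoc)

lemma one_smult_mat[simp]: "(1 :: 'a::monoid_mult) \<cdot>\<^sub>m A = A"
  by (rule eq_matI) auto

lemmas mat_algebra_dims = assoc_mult_mat_dims mult_smult_assoc_mat_dims mult_smult_distrib_dims
  smult_smult_mat

lemma mat_trace_gram_mult:
  fixes A X :: "complex mat"
  assumes A: "A \<in> carrier_mat n k" and X: "X \<in> carrier_mat k m"
  shows "mat_trace (mat_adjoint (A * X) * (A * X)) = mat_trace (A * ((X * mat_adjoint X) * mat_adjoint A))"
proof -
  have AX: "A * X \<in> carrier_mat n m" using A X by (rule mult_carrier_mat)
  note A' = carrier_mat_adjoint[OF A] and X' = carrier_mat_adjoint[OF X]
  have "mat_trace (mat_adjoint (A * X) * (A * X)) = mat_trace ((A * X) * mat_adjoint (A * X))"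
    by (rule mat_trace_mult_comm[OF carrier_mat_adjoint[OF AX] AX])
  also have "(A * X) * mat_adjoint (A * X) = A * ((X * mat_adjoint X) * mat_adjoint A)"
    unfolding mat_adjoint_mult[OF A X] assoc_mult_mat[OF A X mult_carrier_mat[OF X' A']]
      assoc_mult_mat[OF X X' A'] ..
  finally show ?thesis .
qed

lemma mat_trace_sandwich_lincomb:
  assumes L: "L \<in> carrier_mat n m" and A: "A \<in> carrier_mat m m" and B: "B \<in> carrier_mat m m"
  shows "mat_trace (L * ((a \<cdot>\<^sub>m A + b \<cdot>\<^sub>m B) * mat_adjoint L))
    = a * mat_trace (L * (A * mat_adjoint L)) + b * mat_trace (L * (B * mat_adjoint L))"
proof -
  note aA = smult_carrier_mat[OF A, of a] and bB = smult_carrier_mat[OF B, of b]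
    and L' = carrier_mat_adjoint[OF L]
  have "L * ((a \<cdot>\<^sub>m A + b \<cdot>\<^sub>m B) * mat_adjoint L)
      = a \<cdot>\<^sub>m (L * (A * mat_adjoint L)) + b \<cdot>\<^sub>m (L * (B * mat_adjoint L))"
    unfolding add_mult_distrib_mat[OF aA bB L']
      mult_add_distrib_mat[OF L mult_carrier_mat[OF aA L'] mult_carrier_mat[OF bB L']]
    unfolding mult_smult_assoc_mat[OF A L'] mult_smult_assoc_mat[OF B L']
    unfolding mult_smult_distrib[OF L mult_carrier_mat[OF A L']]
      mult_smult_distrib[OF L mult_carrier_mat[OF B L']] ..
  then show ?thesis
    using A B L by (simp add: mat_trace_add[of _ n] mat_trace_smult[of _ n])
qed

lemma sum_lessThan_add: "(\<Sum>i<(m::nat) + n. f i) = (\<Sum>i<m. f i) + (\<Sum>i<n. f (m + i))"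
  by (induction n) (auto simp: add.assoc)

lemma det_nonzero_of_right_inverse:
  assumes "A \<in> carrier_mat n n" "B \<in> carrier_mat n n" "A * B = 1\<^sub>m n"
  shows "det A \<noteq> (0 :: complex)"
  using det_mult[OF assms(1,2)] assms(3) by auto

lemma minv_mat:
  assumes A: "A \<in> carrier_mat n n" and d: "det A \<noteq> 0"
  shows "minv A \<in> carrier_mat n n" "A * minv A = 1\<^sub>m n" "minv A * A = 1\<^sub>m n"
proof -
  have "A \<in> Units (ring_mat TYPE(complex) n undefined)"
    by (rule det_non_zero_imp_unit[OF A d])
  then obtain B where B: "mat_inverse A = Some B"
    using mat_inverse(1)[OF A, of undefined] by (cases "mat_inverse A") auto
  then show "minv A \<in> carrier_mat n n" "A * minv A = 1\<^sub>m n" "minv A * A = 1\<^sub>m n"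
    using mat_inverse(2)[OF A B] by (auto simp: minv_def)
qed

lemma minv_eqI:
  assumes A: "A \<in> carrier_mat n n" and B: "B \<in> carrier_mat n n" and AB: "A * B = 1\<^sub>m n"
  shows "minv A = B"
proof -
  note inv = minv_mat[OF A det_nonzero_of_right_inverse[OF A B AB]]
  have "minv A = minv A * (A * B)" using inv(1) by (simp add: AB)
  also have "\<dots> = (minv A * A) * B" using inv(1) A B by (simp add: assoc_mult_mat)
  finally show ?thesis using inv(3) B by simp
qed

lemma det_nonzero_lower_triangular:
  assumes "A \<in> carrier_mat n n" "\<And>i j. i < j \<Longrightarrow> j < n \<Longrightarrow> A $$ (i,j) = 0"
    and "\<And>i. i < n \<Longrightarrow> A $$ (i,i) \<noteq> (0 :: complex)"
  shows "det A \<noteq> 0"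
  using det_lower_triangular[OF assms(2,1)] assms by (simp add: prod_list_diag_prod)

section \<open>The augmented channel matrix and the whitening filter\<close>

lemma aug_mat_gram:
  assumes H: "H \<in> carrier_mat nr nt" and N0: "N0 > 0" and Es: "Es > 0"
  shows "mat_adjoint (aug_mat H N0 Es nr nt) * aug_mat H N0 Es nr nt
    = complex_of_real (1 / N0) \<cdot>\<^sub>m (mat_adjoint H * H + complex_of_real (N0 / Es) \<cdot>\<^sub>m 1\<^sub>m nt)"
    (is "mat_adjoint ?Ha * ?Ha = ?M")
proof (rule eq_matI)
  have Ha: "?Ha \<in> carrier_mat (nr + nt) nt" by (simp add: aug_mat_def)
  fix i j assume "i < dim_row ?M" and "j < dim_col ?M"
  then have i: "i < nt" and j: "j < nt" using H by auto
  have sqrt_sq: "cnj (a / complex_of_real (sqrt c)) * (b / complex_of_real (sqrt c)) = cnj a * b / complex_of_real c"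
    if "c > 0" for a b c
    using that by (simp add: field_simps flip: of_real_mult)
  have "(mat_adjoint ?Ha * ?Ha) $$ (i,j) = (\<Sum>k<nr+nt. cnj (?Ha $$ (k,i)) * ?Ha $$ (k,j))"
    using i j Ha by (simp add: scalar_prod_def atLeast0LessThan)
  also have "\<dots> = (\<Sum>k<nr. cnj (H $$ (k,i)) * H $$ (k,j) / complex_of_real N0)
      + (\<Sum>t<nt. cnj (if t = i then 1 / complex_of_real (sqrt Es) else 0)
          * (if t = j then 1 / complex_of_real (sqrt Es) else 0))"
    unfolding sum_lessThan_add using i j N0 by (simp add: aug_mat_def sqrt_sq flip: of_real_mult)
  also have "(\<Sum>t<nt. cnj (if t = i then 1 / complex_of_real (sqrt Es) else 0)
      * (if t = j then 1 / complex_of_real (sqrt Es) else 0)) = (if i = j then 1 / complex_of_real Es else 0)"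
    using i j Es sqrt_sq[of Es 1 1] by (auto simp: if_distrib cong: if_cong)
  also have "(\<Sum>k<nr. cnj (H $$ (k,i)) * H $$ (k,j) / complex_of_real N0)
      + (if i = j then 1 / complex_of_real Es else 0) = ?M $$ (i,j)"
    using i j H N0 Es
    by (simp add: scalar_prod_def atLeast0LessThan sum_divide_distrib[symmetric] field_simps)
  finally show "(mat_adjoint ?Ha * ?Ha) $$ (i,j) = ?M $$ (i,j)" .
qed (use H in \<open>auto simp: aug_mat_def\<close>)

context
  fixes S :: "complex mat" and k :: nat
  assumes S: "S \<in> carrier_mat k k" and det_S: "det S \<noteq> 0"
begin

definition row_sq_norm_minv :: "nat \<Rightarrow> real" where
  "row_sq_norm_minv a = (\<Sum>b<k. (cmod (minv S $$ (a,b)))\<^sup>2)"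

lemma row_sq_norm_minv_pos:
  assumes a: "a < k"
  shows "row_sq_norm_minv a > 0"
proof (rule ccontr)
  assume "\<not> row_sq_norm_minv a > 0"
  then have "row_sq_norm_minv a = 0"
    unfolding row_sq_norm_minv_def by (meson antisym not_less sum_nonneg zero_le_power2)
  then have "minv S $$ (a,b) = 0" if "b < k" for b
    using that by (simp add: row_sq_norm_minv_def sum_nonneg_eq_0_iff)
  then have "(minv S * S) $$ (a,a) = 0"
    using minv_mat(1)[OF S det_S] S a by (simp add: scalar_prod_def atLeast0LessThan)
  then show False using minv_mat(3)[OF S det_S] a by simp
qed

lemma Sigma_a_index:
  assumes "a < k" "b < k"
  shows "Sigma_a S $$ (a,b) = (if a = b then complex_of_real (1 / sqrt (row_sq_norm_minv a)) else 0)"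
proof -
  have "(minv S * mat_adjoint (minv S)) $$ (c,c) = of_real (row_sq_norm_minv c)" if "c < k" for c
    using that minv_mat(1)[OF S det_S]
    by (simp add: row_sq_norm_minv_def scalar_prod_def atLeast0LessThan complex_norm_square
        mult.commute del: of_real_power)
  then show ?thesis
    using assms S by (simp add: Sigma_a_def Let_def)
qed

lemma Sigma_a_carrier: "Sigma_a S \<in> carrier_mat k k"
  using S by (simp add: Sigma_a_def Let_def)

lemma Sigma_a_minv_index:
  assumes a: "a < k" and b: "b < k"
  shows "(Sigma_a S * minv S) $$ (a,b) = complex_of_real (1 / sqrt (row_sq_norm_minv a)) * minv S $$ (a,b)"
proof -
  have "(Sigma_a S * minv S) $$ (a,b) = (\<Sum>i<k. Sigma_a S $$ (a,i) * minv S $$ (i,b))"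
    using a b minv_mat(1)[OF S det_S] Sigma_a_carrier by (simp add: scalar_prod_def atLeast0LessThan)
  also have "\<dots> = (\<Sum>i<k. if i = a then complex_of_real (1 / sqrt (row_sq_norm_minv a)) * minv S $$ (a,b) else 0)"
    using a by (intro sum.cong) (auto simp: Sigma_a_index)
  finally show ?thesis using a by simp
qed

lemma row_sq_norm_Sigma_a_minv:
  assumes a: "a < k"
  shows "(\<Sum>b<k. (cmod ((Sigma_a S * minv S) $$ (a,b)))\<^sup>2) = 1"
proof -
  have "(\<Sum>b<k. (cmod ((Sigma_a S * minv S) $$ (a,b)))\<^sup>2)
      = (\<Sum>b<k. (cmod (minv S $$ (a,b)))\<^sup>2) / row_sq_norm_minv a"
    using row_sq_norm_minv_pos[OF a] a
    by (simp add: Sigma_a_minv_index norm_divide power_divide sum_divide_distrib)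
  then show ?thesis
    using row_sq_norm_minv_pos[OF a] by (simp add: row_sq_norm_minv_def)
qed

lemma Sigma_a_minv_mult: "Sigma_a S * minv S * S = Sigma_a S"
  using minv_mat[OF S det_S] Sigma_a_carrier S by (simp add: assoc_mult_mat[of _ k k _ k _ k])

end

lemma lr_block_carrier: "lr_block L nt \<nu> \<in> carrier_mat (nt - \<nu>) (nt - \<nu>)"
  by (simp add: lr_block_def)

lemma det_lr_block_nonzero:
  assumes "L \<in> carrier_mat nt nt" "\<And>i j. i < j \<Longrightarrow> j < nt \<Longrightarrow> L $$ (i,j) = 0"
    and "\<And>i. i < nt \<Longrightarrow> L $$ (i,i) \<noteq> 0"
  shows "det (lr_block L nt \<nu>) \<noteq> 0"
  using assms by (intro det_nonzero_lower_triangular[OF lr_block_carrier]) (auto simp: lr_block_def)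

lemma W_ap_four_block:
  "W_ap L nt \<nu> = four_block_mat (1\<^sub>m \<nu>) (0\<^sub>m \<nu> (nt - \<nu>)) (0\<^sub>m (nt - \<nu>) \<nu>)
    (Sigma_a (lr_block L nt \<nu>) * minv (lr_block L nt \<nu>))"
  by (simp add: W_ap_def Let_def)

lemma carrier_W_ap:
  assumes "\<nu> \<le> nt" "det (lr_block L nt \<nu>) \<noteq> 0"
  shows "W_ap L nt \<nu> \<in> carrier_mat nt nt"
proof -
  have D: "Sigma_a (lr_block L nt \<nu>) * minv (lr_block L nt \<nu>) \<in> carrier_mat (nt - \<nu>) (nt - \<nu>)"
    using Sigma_a_carrier[OF lr_block_carrier assms(2)] minv_mat(1)[OF lr_block_carrier assms(2)] by auto
  show ?thesis
    using four_block_carrier_mat[OF one_carrier_mat D, of \<nu> "0\<^sub>m \<nu> (nt - \<nu>)" "0\<^sub>m (nt - \<nu>) \<nu>"] assms(1)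
    by (simp add: W_ap_four_block)
qed

lemma trace_W_ap_mult_adjoint:
  assumes det: "det (lr_block L nt \<nu>) \<noteq> 0" and \<nu>: "\<nu> \<le> nt"
  shows "mat_trace (W_ap L nt \<nu> * mat_adjoint (W_ap L nt \<nu>)) = of_nat nt"
proof -
  define k where "k = nt - \<nu>"
  define D where "D = Sigma_a (lr_block L nt \<nu>) * minv (lr_block L nt \<nu>)"
  note S = lr_block_carrier[of L nt \<nu>, folded k_def]
  have D: "D \<in> carrier_mat k k"
    using Sigma_a_carrier[OF S] minv_mat(1)[OF S] det by (simp add: D_def k_def)
  have W: "W_ap L nt \<nu> = four_block_mat (1\<^sub>m \<nu>) (0\<^sub>m \<nu> k) (0\<^sub>m k \<nu>) D"
    by (simp add: W_ap_four_block D_def k_def)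
  have rows_top: "(\<Sum>j<\<nu> + k. (cmod (W_ap L nt \<nu> $$ (i,j)))\<^sup>2) = 1" if "i < \<nu>" for i
  proof -
    have "(cmod (if i = j then 1 else 0 :: complex))\<^sup>2 = (if j = i then 1 else 0)" for j by simp
    with that D show ?thesis by (simp add: W sum_lessThan_add)
  qed
  have D_rows: "(\<Sum>b<k. (cmod (D $$ (a,b)))\<^sup>2) = 1" if "a < k" for a
    using row_sq_norm_Sigma_a_minv[OF S _ that] det by (simp add: D_def k_def)
  have rows_bottom: "(\<Sum>j<\<nu> + k. (cmod (W_ap L nt \<nu> $$ (\<nu> + a,j)))\<^sup>2) = 1" if "a < k" for a
    using that D D_rows by (simp add: W sum_lessThan_add)
  have "mat_trace (W_ap L nt \<nu> * mat_adjoint (W_ap L nt \<nu>))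
      = of_real (\<Sum>i<\<nu> + k. \<Sum>j<\<nu> + k. (cmod (W_ap L nt \<nu> $$ (i,j)))\<^sup>2)"
    using D by (intro mat_trace_mult_adjoint) (simp add: W)
  also have "(\<Sum>i<\<nu> + k. \<Sum>j<\<nu> + k. (cmod (W_ap L nt \<nu> $$ (i,j)))\<^sup>2) = \<nu> + k"
    by (subst sum_lessThan_add) (simp add: rows_top rows_bottom)
  finally show ?thesis using \<nu> by (simp add: k_def)
qed

lemma L_ap_index:
  assumes L: "L \<in> carrier_mat nt nt" and \<nu>: "\<nu> \<le> nt" and det: "det (lr_block L nt \<nu>) \<noteq> 0"
  shows "\<And>i j. i < \<nu> \<Longrightarrow> j < nt \<Longrightarrow> L_ap L nt \<nu> $$ (i,j) = L $$ (i,j)"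
    and "\<And>i j. \<nu> \<le> i \<Longrightarrow> \<nu> \<le> j \<Longrightarrow> i < nt \<Longrightarrow> j < nt \<Longrightarrow>
      L_ap L nt \<nu> $$ (i,j) = Sigma_a (lr_block L nt \<nu>) $$ (i - \<nu>, j - \<nu>)"
proof -
  define k where "k = nt - \<nu>"
  define S where "S = lr_block L nt \<nu>"
  have S: "S \<in> carrier_mat k k" by (simp add: S_def k_def lr_block_carrier)
  note det = det[folded S_def]
  obtain P Z R S' where split: "split_block L \<nu> \<nu> = (P, Z, R, S')" by (metis prod_cases4)
  have dims: "dim_row L = \<nu> + k" "dim_col L = \<nu> + k" using L \<nu> by (auto simp: k_def)
  have "S' = S"
    using split L by (auto simp: split_block_def S_def lr_block_def Let_def)
  then have L_blocks: "L = four_block_mat P Z R S" and P: "P \<in> carrier_mat \<nu> \<nu>"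
    and Z: "Z \<in> carrier_mat \<nu> k" and R: "R \<in> carrier_mat k \<nu>"
    using split_block[OF split dims] by auto
  have "L_ap L nt \<nu> = four_block_mat (1\<^sub>m \<nu>) (0\<^sub>m \<nu> k) (0\<^sub>m k \<nu>) (Sigma_a S * minv S)
      * four_block_mat P Z R S"
    unfolding L_ap_def W_ap_four_block S_def[symmetric] k_def[symmetric] using L_blocks by simp
  also have "\<dots> = four_block_mat P Z (Sigma_a S * minv S * R) (Sigma_a S)"
    using P Z R S Sigma_a_carrier[OF S det] minv_mat(1)[OF S det] Sigma_a_minv_mult[OF S det]
    by (subst mult_four_block_mat[of _ \<nu> \<nu> _ k _ k _ _ \<nu> _ k]) auto
  finally have L_ap: "L_ap L nt \<nu> = four_block_mat P Z (Sigma_a S * minv S * R) (Sigma_a S)" .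
  have L_index: "L $$ (i,j) = four_block_mat P Z R S $$ (i,j)" for i j
    using L_blocks by simp
  show "L_ap L nt \<nu> $$ (i,j) = L $$ (i,j)" if "i < \<nu>" "j < nt" for i j
    using that P Z S Sigma_a_carrier[OF S det] \<nu> by (simp add: L_ap L_index k_def)
  show "L_ap L nt \<nu> $$ (i,j) = Sigma_a (lr_block L nt \<nu>) $$ (i - \<nu>, j - \<nu>)"
    if "\<nu> \<le> i" "\<nu> \<le> j" "i < nt" "j < nt" for i j
    using that P Z S Sigma_a_carrier[OF S det] \<nu> by (simp add: L_ap S_def k_def)
qed

lemma L_ap_lower_triangular:
  assumes L: "L \<in> carrier_mat nt nt" and \<nu>: "\<nu> \<le> nt"
    and lower: "\<And>i j. i < j \<Longrightarrow> j < nt \<Longrightarrow> L $$ (i,j) = 0"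
    and diag: "\<And>i. i < nt \<Longrightarrow> L $$ (i,i) \<noteq> 0"
  shows "\<And>i j. i < j \<Longrightarrow> j < nt \<Longrightarrow> L_ap L nt \<nu> $$ (i,j) = 0"
    and "\<And>i. i < nt \<Longrightarrow> L_ap L nt \<nu> $$ (i,i) \<noteq> 0"
proof -
  have det: "det (lr_block L nt \<nu>) \<noteq> 0"
    using L lower diag by (rule det_lr_block_nonzero)
  note S = lr_block_carrier[of L nt \<nu>]
  note index = L_ap_index[OF L \<nu> det]
  show "L_ap L nt \<nu> $$ (i,j) = 0" if "i < j" "j < nt" for i j
  proof (cases "i < \<nu>")
    case True
    then show ?thesis using that by (simp add: index lower)
  next
    case False
    then show ?thesis using that S det by (simp add: index Sigma_a_index)
  qed
  show "L_ap L nt \<nu> $$ (i,i) \<noteq> 0" if "i < nt" for i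
  proof (cases "i < \<nu>")
    case True
    then show ?thesis using that by (simp add: index diag)
  next
    case False
    with that have a: "i - \<nu> < nt - \<nu>" by simp
    with False that S det show ?thesis
      using row_sq_norm_minv_pos[OF S det a] by (simp add: index Sigma_a_index)
  qed
qed

lemma ln_p_ap_cond:
  "ln (p_ap_cond F G Es y x)
    = 2 * Re (conjugate y \<bullet> (F *\<^sub>v x)) - Re (conjugate x \<bullet> (G *\<^sub>v x)) + Re (conjugate x \<bullet> x) / Es"
  by (simp add: p_ap_cond_def)

section \<open>Complex Gaussian integrals\<close>

lemma (in product_sigma_finite) has_bochner_integral_product_prod:
  fixes f :: "'i \<Rightarrow> 'a \<Rightarrow> 'b::{real_normed_field,banach,second_countable_topology}"
  assumes "finite I" and "\<And>i. i \<in> I \<Longrightarrow> has_bochner_integral (M i) (f i) (a i)"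
  shows "has_bochner_integral (Pi\<^sub>M I M) (\<lambda>x. \<Prod>i\<in>I. f i (x i)) (\<Prod>i\<in>I. a i)"
  using assms by (simp add: has_bochner_integral_iff product_integrable_prod product_integral_prod)

lemma has_bochner_integral_complex_Re_Im:
  fixes f g :: "real \<Rightarrow> complex"
  assumes f: "has_bochner_integral lborel f a" and g: "has_bochner_integral lborel g b"
  shows "has_bochner_integral (lborel :: complex measure) (\<lambda>w. f (Re w) * g (Im w)) (a * b)"
proof -
  interpret product_sigma_finite "\<lambda>_::complex. lborel :: real measure"
    by (simp add: product_sigma_finite_def lborel.sigma_finite_measure_axioms)
  define h where "h c = (if c = 1 then f else g)" for c :: complex
  define e where "e c = (if c = 1 then a else b)" for c :: complex
  have [measurable]: "f \<in> borel_measurable borel" "g \<in> borel_measurable borel"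
    using f g by (auto dest: has_bochner_integral_integrable)
  have "has_bochner_integral (\<Pi>\<^sub>M c\<in>Basis. lborel) (\<lambda>x. \<Prod>c\<in>Basis. h c (x c)) (\<Prod>c\<in>Basis. e c)"
    using f g by (intro has_bochner_integral_product_prod) (auto simp: h_def e_def)
  then have "has_bochner_integral (\<Pi>\<^sub>M c\<in>Basis. lborel)
      (\<lambda>x. f (Re (\<Sum>c\<in>Basis. x c *\<^sub>R c)) * g (Im (\<Sum>c\<in>Basis. x c *\<^sub>R c))) (a * b)"
    by (simp add: Basis_complex_def h_def e_def)
  then show ?thesis
    by (subst lborel_eq) (rule has_bochner_integral_distr; measurable)
qed

definition cnormal_density :: "real \<Rightarrow> complex \<Rightarrow> real" where
  "cnormal_density s w = exp (- (cmod w)\<^sup>2 / s) / (pi * s)"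

lemma cgauss_density_eq_prod: "cgauss_density n s v = (\<Prod>k<n. cnormal_density s (v k))"
  unfolding cgauss_density_def cnormal_density_def
  by (simp add: prod_dividef exp_sum[symmetric] sum_negf sum_divide_distrib)

lemma cnormal_density_nonneg: "s > 0 \<Longrightarrow> cnormal_density s w \<ge> 0"
  by (simp add: cnormal_density_def)

lemma borel_measurable_cnormal_density[measurable]: "cnormal_density s \<in> borel_measurable borel"
  unfolding cnormal_density_def by measurable

lemma cnormal_density_Re_Im:
  assumes "s > 0"
  shows "cnormal_density s w
    = normal_density 0 (sqrt (s/2)) (Re w) * normal_density 0 (sqrt (s/2)) (Im w)"
proof -
  have "cnormal_density s w = exp (- (Re w)\<^sup>2 / s) * exp (- (Im w)\<^sup>2 / s) / (pi * s)"
    unfolding cnormal_density_def cmod_power2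
    by (simp add: exp_add[symmetric] diff_divide_distrib add_divide_distrib)
  with assms show ?thesis
    by (simp add: normal_density_def real_sqrt_mult[symmetric] field_simps)
qed

context
  fixes s :: real
  assumes s: "s > 0"
begin

private abbreviation "nd \<equiv> \<lambda>x. complex_of_real (normal_density 0 (sqrt (s/2)) x)"

private lemma normal_moments:
  "has_bochner_integral lborel nd 1"
  "has_bochner_integral lborel (\<lambda>x. of_real x * nd x) 0"
  "has_bochner_integral lborel (\<lambda>x. of_real (x\<^sup>2) * nd x) (of_real s / 2)"
proof -
  have \<sigma>: "sqrt (s/2) > 0" using s by simp
  have moment: "has_bochner_integral lborel (\<lambda>x. complex_of_real (normal_density 0 (sqrt (s/2)) x * x ^ k))
      (of_real (integral\<^sup>L lborel (\<lambda>x. normal_density 0 (sqrt (s/2)) x * x ^ k)))" for k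
    using integrable_normal_moment[OF \<sigma>, of 0 k]
    by (intro has_bochner_integral_of_real) (simp add: has_bochner_integral_iff)
  show "has_bochner_integral lborel nd 1"
    using moment[of 0] integral_normal_density[OF \<sigma>] by simp
  show "has_bochner_integral lborel (\<lambda>x. of_real x * nd x) 0"
  proof -
    have "integral\<^sup>L lborel (\<lambda>x. normal_density 0 (sqrt (s/2)) x * x ^ 1) = 0"
      using integral_normal_moment_nz_1[OF \<sigma>, of 0] by simp
    with moment[of 1] show ?thesis by (simp add: mult.commute)
  qed
  show "has_bochner_integral lborel (\<lambda>x. of_real (x\<^sup>2) * nd x) (of_real s / 2)"
  proof -
    have I: "integral\<^sup>L lborel (\<lambda>x. normal_density 0 (sqrt (s/2)) x * x ^ 2) = s / 2"
      using integral_normal_moment_even[OF \<sigma>, of 0 1] s by simp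
    show ?thesis
      using moment[of 2] unfolding I by (simp add: mult.commute)
  qed
qed

lemma has_bochner_integral_cnormal_density:
  "has_bochner_integral lborel (\<lambda>w. complex_of_real (cnormal_density s w)) 1"
  using has_bochner_integral_complex_Re_Im[OF normal_moments(1,1)]
  by (simp add: cnormal_density_Re_Im[OF s])

lemma cnormal_mean:
  "has_bochner_integral lborel (\<lambda>w. w * cnormal_density s w) 0"
proof -
  have "w * cnormal_density s w = of_real (Re w) * nd (Re w) * nd (Im w)
      + nd (Re w) * (\<i> * (of_real (Im w) * nd (Im w)))" for w
    by (simp add: cnormal_density_Re_Im[OF s] complex_eq_iff)
  moreover have "has_bochner_integral lborel (\<lambda>w. of_real (Re w) * nd (Re w) * nd (Im w)
      + nd (Re w) * (\<i> * (of_real (Im w) * nd (Im w)))) (0 * 1 + 1 * (\<i> * 0))"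
    by (intro has_bochner_integral_add has_bochner_integral_complex_Re_Im
        has_bochner_integral_mult_right normal_moments)
  ultimately show ?thesis by simp
qed

lemma cnormal_second_moment:
  "has_bochner_integral lborel (\<lambda>w. cnj w * w * cnormal_density s w) (of_real s)"
proof -
  have "cnj w * w * cnormal_density s w
      = of_real ((Re w)\<^sup>2) * nd (Re w) * nd (Im w) + nd (Re w) * (of_real ((Im w)\<^sup>2) * nd (Im w))" for w
    by (simp add: cnormal_density_Re_Im[OF s] complex_eq_iff power2_eq_square algebra_simps)
  moreover have "has_bochner_integral lborel (\<lambda>w. of_real ((Re w)\<^sup>2) * nd (Re w) * nd (Im w)
      + nd (Re w) * (of_real ((Im w)\<^sup>2) * nd (Im w))) (of_real s / 2 * 1 + 1 * (of_real s / 2))"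
    by (intro has_bochner_integral_add has_bochner_integral_complex_Re_Im normal_moments)
  ultimately show ?thesis by simp
qed

end

lemma has_bochner_integral_cgauss_prod:
  fixes f :: "nat \<Rightarrow> complex \<Rightarrow> complex" and a :: "nat \<Rightarrow> complex"
  assumes "\<And>k. k < n \<Longrightarrow> has_bochner_integral lborel (\<lambda>w. f k w * cnormal_density s w) (a k)"
  shows "has_bochner_integral (cvec_measure n)
    (\<lambda>v. (\<Prod>k<n. f k (v k)) * cgauss_density n s v) (\<Prod>k<n. a k)"
proof -
  interpret product_sigma_finite "\<lambda>_::nat. lborel :: complex measure"
    by (simp add: product_sigma_finite_def lborel.sigma_finite_measure_axioms)
  have "has_bochner_integral (cvec_measure n)
      (\<lambda>v. \<Prod>k<n. f k (v k) * cnormal_density s (v k)) (\<Prod>k<n. a k)"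
    unfolding cvec_measure_def using assms by (intro has_bochner_integral_product_prod) auto
  then show ?thesis
    by (simp add: cgauss_density_eq_prod prod.distrib)
qed

context
  fixes s :: real and n :: nat
  assumes s: "s > 0"
begin

lemma has_bochner_integral_cgauss_density:
  "has_bochner_integral (cvec_measure n) (\<lambda>v. complex_of_real (cgauss_density n s v)) 1"
  using has_bochner_integral_cgauss_prod[of n "\<lambda>_ _. 1" s "\<lambda>_. 1"]
    has_bochner_integral_cnormal_density[OF s]
  by simp

lemma cgauss_mean:
  assumes "j < n"
  shows "has_bochner_integral (cvec_measure n) (\<lambda>v. v j * cgauss_density n s v) 0"
proof -
  have "has_bochner_integral (cvec_measure n)
      (\<lambda>v. (\<Prod>k<n. if k = j then v k else 1) * cgauss_density n s v)
      (\<Prod>k<n. if k = j then 0 else 1)"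
    using cnormal_mean[OF s] has_bochner_integral_cnormal_density[OF s]
    by (intro has_bochner_integral_cgauss_prod) auto
  with assms show ?thesis by simp
qed

lemma cgauss_conj_mean:
  "j < n \<Longrightarrow> has_bochner_integral (cvec_measure n) (\<lambda>v. cnj (v j) * cgauss_density n s v) 0"
  using has_bochner_integral_cnj[OF cgauss_mean] by simp

lemma cgauss_covariance:
  assumes "i < n" "j < n"
  shows "has_bochner_integral (cvec_measure n)
    (\<lambda>v. cnj (v i) * v j * cgauss_density n s v) (if i = j then of_real s else 0)"
proof -
  define f where "f k w = (if k = i then cnj w else 1) * (if k = j then w else 1)" for k w
  define a :: "nat \<Rightarrow> complex"
    where "a k = (if k = i \<and> k = j then of_real s else if k = i \<or> k = j then 0 else 1)" for k
  have "has_bochner_integral lborel (\<lambda>w. f k w * cnormal_density s w) (a k)" for k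
    using has_bochner_integral_cnj[OF cnormal_mean[OF s]] cnormal_mean[OF s]
      cnormal_second_moment[OF s] has_bochner_integral_cnormal_density[OF s]
    by (auto simp: f_def a_def)
  then have "has_bochner_integral (cvec_measure n)
      (\<lambda>v. (\<Prod>k<n. f k (v k)) * cgauss_density n s v) (\<Prod>k<n. a k)"
    by (rule has_bochner_integral_cgauss_prod)
  moreover have "(\<Prod>k<n. f k (v k)) = cnj (v i) * v j" for v
    using assms by (simp add: f_def prod.distrib)
  moreover have "(\<Prod>k<n. a k) = (if i = j then of_real s else 0)"
  proof (cases "i = j")
    case True
    then have "a = (\<lambda>k. if k = j then of_real s else 1)" by (auto simp: a_def)
    with True assms show ?thesis by simp
  next
    case False
    with assms show ?thesis by (auto simp: a_def)
  qed
  ultimately show ?thesis by simp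
qed

lemma has_bochner_integral_cgauss_quadratic:
  assumes A: "A \<in> carrier_mat n n" and c: "c \<in> carrier_vec n"
  shows "has_bochner_integral (cvec_measure n)
    (\<lambda>v. Re (conjugate (vec n v) \<bullet> (A *\<^sub>v vec n v) + conjugate (vec n v) \<bullet> c + d)
      * cgauss_density n s v)
    (s * Re (mat_trace A) + Re d)"
proof -
  let ?g = "\<lambda>v. complex_of_real (cgauss_density n s v)"
  have expand: "(conjugate (vec n v) \<bullet> (A *\<^sub>v vec n v) + conjugate (vec n v) \<bullet> c + d) * ?g v
      = (\<Sum>i<n. \<Sum>j<n. A $$ (i,j) * (cnj (v i) * v j * ?g v))
        + (\<Sum>i<n. c $ i * (cnj (v i) * ?g v)) + d * ?g v" for v
    using A c by (simp add: scalar_prod_def atLeast0LessThan sum_distrib_left sum_distrib_right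
        algebra_simps)
  have "has_bochner_integral (cvec_measure n)
      (\<lambda>v. (\<Sum>i<n. \<Sum>j<n. A $$ (i,j) * (cnj (v i) * v j * ?g v))
        + (\<Sum>i<n. c $ i * (cnj (v i) * ?g v)) + d * ?g v)
      ((\<Sum>i<n. \<Sum>j<n. A $$ (i,j) * (if i = j then of_real s else 0)) + (\<Sum>i<n. c $ i * 0) + d * 1)"
    by (intro has_bochner_integral_add has_bochner_integral_sum has_bochner_integral_mult_right
        cgauss_covariance cgauss_conj_mean has_bochner_integral_cgauss_density) auto
  moreover have "(\<Sum>i<n. \<Sum>j<n. A $$ (i,j) * (if i = j then of_real s else 0)) + (\<Sum>i<n. c $ i * 0) + d * 1
      = of_real s * mat_trace A + d"
    using A by (simp add: mat_trace_def sum_distrib_left mult.commute if_distrib cong: if_cong)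
  ultimately have "has_bochner_integral (cvec_measure n)
      (\<lambda>v. (conjugate (vec n v) \<bullet> (A *\<^sub>v vec n v) + conjugate (vec n v) \<bullet> c + d) * ?g v)
      (of_real s * mat_trace A + d)"
    by (simp only: expand)
  from has_bochner_integral_Re[OF this] show ?thesis by simp
qed

end

lemma has_bochner_integral_cgauss_hermitian_form:
  assumes "s > 0" "A \<in> carrier_mat n n"
  shows "has_bochner_integral (cvec_measure n)
    (\<lambda>v. Re (conjugate (vec n v) \<bullet> (A *\<^sub>v vec n v)) * cgauss_density n s v) (s * Re (mat_trace A))"
  using has_bochner_integral_cgauss_quadratic[OF assms zero_carrier_vec, of 0] by simp

lemma nn_integral_lborel_translate:
  fixes f :: "'a::euclidean_space \<Rightarrow> ennreal"
  assumes [measurable]: "f \<in> borel_measurable borel"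
  shows "(\<integral>\<^sup>+y. f (t + y) \<partial>lborel) = (\<integral>\<^sup>+y. f y \<partial>lborel)"
  by (subst (2) lborel_distr_plus[of t, symmetric]) (simp add: nn_integral_distr)

lemma nn_integral_exp_affine_cmod:
  fixes l m :: complex
  assumes l: "l \<noteq> 0"
  shows "(\<integral>\<^sup>+y. ennreal (exp (- (cmod (l * y + m))\<^sup>2)) \<partial>lborel) = ennreal (pi / (cmod l)\<^sup>2)"
proof -
  define s where "s = 1 / (cmod l)\<^sup>2"
  have s: "s > 0" using l by (simp add: s_def)
  have density: "has_bochner_integral lborel (cnormal_density s) 1"
    using has_bochner_integral_Re[OF has_bochner_integral_cnormal_density[OF s]] by simp
  have "exp (- (cmod (l * y + m))\<^sup>2) = pi / (cmod l)\<^sup>2 * cnormal_density s (m / l + y)" for y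
  proof -
    have "l * y + m = l * (m / l + y)" using l by (simp add: field_simps)
    then show ?thesis
      using l by (simp add: cnormal_density_def s_def norm_mult power_mult_distrib)
  qed
  then have "(\<integral>\<^sup>+y. ennreal (exp (- (cmod (l * y + m))\<^sup>2)) \<partial>lborel)
      = (\<integral>\<^sup>+y. ennreal (pi / (cmod l)\<^sup>2) * ennreal (cnormal_density s (m / l + y)) \<partial>lborel)"
    by (simp add: ennreal_mult'[symmetric])
  also have "\<dots> = ennreal (pi / (cmod l)\<^sup>2) * (\<integral>\<^sup>+y. ennreal (cnormal_density s (m / l + y)) \<partial>lborel)"
    by (rule nn_integral_cmult) measurable
  also have "(\<integral>\<^sup>+y. ennreal (cnormal_density s (m / l + y)) \<partial>lborel) = 1"
    using density s
    by (subst nn_integral_lborel_translate)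
      (auto simp: has_bochner_integral_iff nn_integral_eq_integral cnormal_density_nonneg)
  finally show ?thesis by simp
qed

lemma nn_integral_exp_lower_triangular:
  fixes L :: "nat \<Rightarrow> nat \<Rightarrow> complex" and c :: "nat \<Rightarrow> complex"
  assumes "\<And>i j. i < j \<Longrightarrow> j < n \<Longrightarrow> L i j = 0" and "\<And>i. i < n \<Longrightarrow> L i i \<noteq> 0"
  shows "(\<integral>\<^sup>+x. ennreal (exp (- (\<Sum>i<n. (cmod ((\<Sum>j<n. L i j * x j) - c i))\<^sup>2))) \<partial>cvec_measure n)
    = ennreal (pi ^ n / (\<Prod>i<n. (cmod (L i i))\<^sup>2))"
proof -
  interpret product_sigma_finite "\<lambda>_::nat. lborel :: complex measure"
    by (simp add: product_sigma_finite_def lborel.sigma_finite_measure_axioms)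
  show ?thesis
    using assms
  proof (induction n)
    case 0
    show ?case
      by (simp add: cvec_measure_def nn_integral_empty PiM_empty)
  next
    case (Suc n)
    define Q where "Q x = (\<Sum>i<n. (cmod ((\<Sum>j<n. L i j * x j) - c i))\<^sup>2)" for x
    define r where "r x = (\<Sum>j<n. L n j * x j) - c n" for x
    have last_row: "(\<Sum>i<Suc n. (cmod ((\<Sum>j<Suc n. L i j * (x(n := y)) j) - c i))\<^sup>2)
        = Q x + (cmod (L n n * y + r x))\<^sup>2" for x y
      using Suc.prems(1) by (simp add: Q_def r_def algebra_simps)
    have [measurable]: "(\<lambda>x. ennreal (exp (- (\<Sum>i<Suc n. (cmod ((\<Sum>j<Suc n. L i j * x j) - c i))\<^sup>2))))
        \<in> borel_measurable (Pi\<^sub>M (insert n {..<n}) (\<lambda>_. lborel))"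
      by measurable auto
    have [measurable]: "(\<lambda>x. ennreal (exp (- Q x))) \<in> borel_measurable (Pi\<^sub>M {..<n} (\<lambda>_. lborel))"
      unfolding Q_def by measurable
    have split: "Pi\<^sub>M {..<Suc n} (\<lambda>_. lborel) = Pi\<^sub>M (insert n {..<n}) (\<lambda>_. lborel :: complex measure)"
      by (simp add: lessThan_Suc)
    have "(\<integral>\<^sup>+x. ennreal (exp (- (\<Sum>i<Suc n. (cmod ((\<Sum>j<Suc n. L i j * x j) - c i))\<^sup>2))) \<partial>cvec_measure (Suc n))
        = (\<integral>\<^sup>+x. (\<integral>\<^sup>+y. ennreal (exp (- (\<Sum>i<Suc n. (cmod ((\<Sum>j<Suc n. L i j * (x(n := y)) j) - c i))\<^sup>2)))
            \<partial>lborel) \<partial>cvec_measure n)"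
      unfolding cvec_measure_def split by (rule product_nn_integral_insert) auto
    also have "\<dots> = (\<integral>\<^sup>+x. (\<integral>\<^sup>+y. ennreal (exp (- Q x)) * ennreal (exp (- (cmod (L n n * y + r x))\<^sup>2))
        \<partial>lborel) \<partial>cvec_measure n)"
      unfolding last_row by (simp add: exp_add[symmetric] ennreal_mult'[symmetric])
    also have "\<dots> = (\<integral>\<^sup>+x. ennreal (exp (- Q x)) * ennreal (pi / (cmod (L n n))\<^sup>2) \<partial>cvec_measure n)"
      using Suc.prems(2) by (simp add: nn_integral_cmult nn_integral_exp_affine_cmod)
    also have "\<dots> = ennreal (pi ^ n / (\<Prod>i<n. (cmod (L i i))\<^sup>2)) * ennreal (pi / (cmod (L n n))\<^sup>2)"
      using Suc by (simp add: Q_def cvec_measure_def nn_integral_multc)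
    also have "\<dots> = ennreal (pi ^ Suc n / (\<Prod>i<Suc n. (cmod (L i i))\<^sup>2))"
      by (simp add: ennreal_mult'[symmetric] field_simps)
    finally show ?case .
  qed
qed

lemma integral_exp_lower_triangular:
  assumes L: "L \<in> carrier_mat n n" and c: "c \<in> carrier_vec n"
    and lower: "\<And>i j. i < j \<Longrightarrow> j < n \<Longrightarrow> L $$ (i,j) = 0"
    and diag: "\<And>i. i < n \<Longrightarrow> L $$ (i,i) \<noteq> 0"
  shows "(\<integral>x. exp (- sq_norm_cvec (L *\<^sub>v vec n x - c)) \<partial>cvec_measure n)
    = pi ^ n / (\<Prod>i<n. (cmod (L $$ (i,i)))\<^sup>2)"
proof -
  have sq: "sq_norm_cvec (L *\<^sub>v vec n x - c)
      = (\<Sum>i<n. (cmod ((\<Sum>j<n. L $$ (i,j) * x j) - c $ i))\<^sup>2)" for x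
    using L c by (simp add: sq_norm_cvec_def scalar_prod_def atLeast0LessThan)
  have [measurable]: "(\<lambda>x. exp (- (\<Sum>i<n. (cmod ((\<Sum>j<n. L $$ (i,j) * x j) - c $ i))\<^sup>2)))
      \<in> borel_measurable (cvec_measure n)"
    unfolding cvec_measure_def by measurable
  have "(\<integral>x. exp (- sq_norm_cvec (L *\<^sub>v vec n x - c)) \<partial>cvec_measure n)
      = enn2real (\<integral>\<^sup>+x. ennreal (exp (- (\<Sum>i<n. (cmod ((\<Sum>j<n. L $$ (i,j) * x j) - c $ i))\<^sup>2)))
          \<partial>cvec_measure n)"
    unfolding sq by (rule integral_eq_nn_integral) auto
  also have "\<dots> = pi ^ n / (\<Prod>i<n. (cmod (L $$ (i,i)))\<^sup>2)"
    using lower diag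
    by (subst nn_integral_exp_lower_triangular[where L = "\<lambda>i j. L $$ (i,j)"]) (auto simp: prod_nonneg)
  finally show ?thesis .
qed

section \<open>The AWLD detector\<close>

locale awld_setting =
  fixes Nr Nt \<nu> :: nat and H Qa La :: "complex mat" and Es N0 :: real
  assumes H: "H \<in> carrier_mat Nr Nt" and Es: "Es > 0" and N0: "N0 > 0"
    and Qa: "Qa \<in> carrier_mat (Nr + Nt) Nt" and Qa_orthonormal: "mat_adjoint Qa * Qa = 1\<^sub>m Nt"
    and La: "La \<in> carrier_mat Nt Nt"
    and La_lower: "\<And>i j. i < j \<Longrightarrow> j < Nt \<Longrightarrow> La $$ (i,j) = 0"
    and La_diag: "\<And>i. i < Nt \<Longrightarrow> La $$ (i,i) \<noteq> 0"
    and QL: "aug_mat H N0 Es Nr Nt = Qa * La"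
    and \<nu>: "\<nu> \<le> Nt"
begin

definition "Mreg = mat_adjoint H * H + complex_of_real (N0 / Es) \<cdot>\<^sub>m 1\<^sub>m Nt"

definition "Wmmse = W_MMSE H (N0 / Es) Nt"

definition "Lap = L_ap La Nt \<nu>"

definition "Gap = mat_adjoint Lap * Lap"

definition "Fap = mat_adjoint Wmmse * Gap"

definition "Kap = Lap * Wmmse"

lemma dims_data[simp]:
  "dim_row H = Nr" "dim_col H = Nt" "dim_row Qa = Nr + Nt" "dim_col Qa = Nt"
  "dim_row La = Nt" "dim_col La = Nt"
  using H Qa La by auto

lemma det_La: "det La \<noteq> 0"
  using La La_lower La_diag by (rule det_nonzero_lower_triangular)

lemmas La_inverse = minv_mat[OF La det_La]

lemma carrier_Mreg: "Mreg \<in> carrier_mat Nt Nt"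
  using H by (simp add: Mreg_def)

lemma dims_inverses[simp]:
  "dim_row Mreg = Nt" "dim_col Mreg = Nt" "dim_row (minv La) = Nt" "dim_col (minv La) = Nt"
  using carrier_Mreg La_inverse by auto

lemma gram_La: "mat_adjoint La * La = complex_of_real (1 / N0) \<cdot>\<^sub>m Mreg"
proof -
  have "mat_adjoint La * La = mat_adjoint La * (mat_adjoint Qa * Qa * La)"
    by (simp add: Qa_orthonormal)
  also have "\<dots> = mat_adjoint (Qa * La) * (Qa * La)"
    by (simp add: mat_adjoint_mult_dims assoc_mult_mat_dims)
  also have "\<dots> = complex_of_real (1 / N0) \<cdot>\<^sub>m Mreg"
    unfolding QL[symmetric] Mreg_def by (rule aug_mat_gram[OF H N0 Es])
  finally show ?thesis .
qed

lemma Mreg_eq: "Mreg = complex_of_real N0 \<cdot>\<^sub>m (mat_adjoint La * La)"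
  using N0 by (simp add: gram_La smult_smult_mat)

lemma Mreg_mult_inverse:
  "Mreg * (complex_of_real (1 / N0) \<cdot>\<^sub>m (minv La * mat_adjoint (minv La))) = 1\<^sub>m Nt"
proof -
  have "Mreg * (complex_of_real (1 / N0) \<cdot>\<^sub>m (minv La * mat_adjoint (minv La)))
      = mat_adjoint La * (La * (minv La * mat_adjoint (minv La)))"
    using N0 by (simp add: Mreg_eq mat_algebra_dims)
  also have "\<dots> = mat_adjoint La * mat_adjoint (minv La)"
    using La_inverse by (simp add: mult_right_inverse_cancel)
  also have "\<dots> = mat_adjoint (minv La * La)"
    by (simp add: mat_adjoint_mult_dims)
  finally show ?thesis
    using La_inverse by simp
qed

lemma det_Mreg: "det Mreg \<noteq> 0"
  using La_inverse by (intro det_nonzero_of_right_inverse[OF carrier_Mreg _ Mreg_mult_inverse]) simp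

lemmas Mreg_inverse = minv_mat[OF carrier_Mreg det_Mreg]

lemma minv_Mreg: "minv Mreg = complex_of_real (1 / N0) \<cdot>\<^sub>m (minv La * mat_adjoint (minv La))"
  using La_inverse by (intro minv_eqI[OF carrier_Mreg _ Mreg_mult_inverse]) simp

lemma dims_minv_Mreg[simp]: "dim_row (minv Mreg) = Nt" "dim_col (minv Mreg) = Nt"
  using Mreg_inverse(1) by auto

lemma minv_Mreg_hermitian: "mat_adjoint (minv Mreg) = minv Mreg"
  unfolding minv_Mreg by (simp add: mat_adjoint_smult mat_adjoint_mult_dims)

lemma La_minv_Mreg:
  assumes "dim_row X = Nt"
  shows "La * (minv Mreg * (mat_adjoint La * X)) = complex_of_real (1 / N0) \<cdot>\<^sub>m X"
proof -
  have adjoint_inverse: "mat_adjoint (minv La) * mat_adjoint La = 1\<^sub>m Nt"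
    using La_inverse by (simp flip: mat_adjoint_mult_dims)
  show ?thesis
    using assms La_inverse adjoint_inverse
    by (simp add: minv_Mreg mat_algebra_dims mult_right_inverse_cancel)
qed

lemma Wmmse_eq: "Wmmse = minv Mreg * mat_adjoint H"
  by (simp add: Wmmse_def W_MMSE_def Mreg_def)

lemma dims_Wmmse[simp]: "dim_row Wmmse = Nt" "dim_col Wmmse = Nr"
  by (simp_all add: Wmmse_eq)

lemma minv_Mreg_gram_H: "minv Mreg * (mat_adjoint H * H) = 1\<^sub>m Nt - complex_of_real (N0 / Es) \<cdot>\<^sub>m minv Mreg"
proof -
  have "mat_adjoint H * H = Mreg - complex_of_real (N0 / Es) \<cdot>\<^sub>m 1\<^sub>m Nt"
    by (rule eq_matI) (auto simp: Mreg_def)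
  moreover have "minv Mreg * (Mreg - complex_of_real (N0 / Es) \<cdot>\<^sub>m 1\<^sub>m Nt)
      = minv Mreg * Mreg - minv Mreg * (complex_of_real (N0 / Es) \<cdot>\<^sub>m 1\<^sub>m Nt)"
    using Mreg_inverse(1) carrier_Mreg by (intro mult_minus_distrib_mat) auto
  ultimately show ?thesis
    using Mreg_inverse by (simp add: mult_smult_distrib_dims)
qed

lemma mmse_error: "1\<^sub>m Nt - Wmmse * H = complex_of_real (N0 / Es) \<cdot>\<^sub>m minv Mreg"
  by (rule eq_matI) (auto simp: Wmmse_eq assoc_mult_mat_dims minv_Mreg_gram_H)

lemma mmse_error_covariance:
  "complex_of_real Es \<cdot>\<^sub>m ((1\<^sub>m Nt - Wmmse * H) * mat_adjoint (1\<^sub>m Nt - Wmmse * H))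
    + complex_of_real N0 \<cdot>\<^sub>m (Wmmse * mat_adjoint Wmmse) = complex_of_real N0 \<cdot>\<^sub>m minv Mreg"
proof -
  have WW: "Wmmse * mat_adjoint Wmmse = minv Mreg - complex_of_real (N0 / Es) \<cdot>\<^sub>m (minv Mreg * minv Mreg)"
  proof -
    have "Wmmse * mat_adjoint Wmmse = (minv Mreg * (mat_adjoint H * H)) * minv Mreg"
      by (simp add: Wmmse_eq mat_adjoint_mult_dims minv_Mreg_hermitian assoc_mult_mat_dims)
    also have "\<dots> = minv Mreg - complex_of_real (N0 / Es) \<cdot>\<^sub>m (minv Mreg * minv Mreg)"
      unfolding minv_Mreg_gram_H using Mreg_inverse(1)
      by (subst minus_mult_distrib_mat[of _ Nt Nt]) (auto simp: mult_smult_assoc_mat_dims)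
    finally show ?thesis .
  qed
  have "Es * (N0 / Es * (N0 / Es)) = N0 * (N0 / Es)"
    using Es by simp
  then have scalar: "complex_of_real Es * (complex_of_real (N0 / Es) * complex_of_real (N0 / Es))
      = complex_of_real N0 * complex_of_real (N0 / Es)"
    by (simp only: of_real_mult[symmetric])
  show ?thesis
    unfolding mmse_error WW
    by (rule eq_matI) (auto simp: mat_adjoint_smult minv_Mreg_hermitian algebra_simps scalar)
qed

lemma Lap_lower: "\<And>i j. i < j \<Longrightarrow> j < Nt \<Longrightarrow> Lap $$ (i,j) = 0"
  and Lap_diag: "\<And>i. i < Nt \<Longrightarrow> Lap $$ (i,i) \<noteq> 0"
  unfolding Lap_def using L_ap_lower_triangular[OF La \<nu> La_lower La_diag] by auto

lemma det_lr_block_La: "det (lr_block La Nt \<nu>) \<noteq> 0"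
  using La La_lower La_diag by (rule det_lr_block_nonzero)

lemma carrier_Lap: "Lap \<in> carrier_mat Nt Nt"
  using carrier_W_ap[OF \<nu> det_lr_block_La] La by (simp add: Lap_def L_ap_def)

lemma dims_Lap[simp]: "dim_row Lap = Nt" "dim_col Lap = Nt"
  using carrier_Lap by auto

lemma det_Gap: "det Gap = of_real (\<Prod>i<Nt. (cmod (Lap $$ (i,i)))\<^sup>2)"
proof -
  have "upper_triangular (mat_adjoint Lap)"
    by (auto simp: upper_triangular_def Lap_lower)
  then have "det (mat_adjoint Lap) = (\<Prod>i<Nt. cnj (Lap $$ (i,i)))"
    using det_upper_triangular[of "mat_adjoint Lap" Nt] carrier_Lap
    by (simp add: prod_list_diag_prod atLeast0LessThan)
  moreover have "det Lap = (\<Prod>i<Nt. Lap $$ (i,i))"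
    using det_lower_triangular[OF Lap_lower carrier_Lap] by (simp add: prod_list_diag_prod atLeast0LessThan)
  ultimately have "det Gap = (\<Prod>i<Nt. cnj (Lap $$ (i,i)) * Lap $$ (i,i))"
    using det_mult[of "mat_adjoint Lap" Nt Lap] carrier_Lap by (simp add: Gap_def prod.distrib)
  then show ?thesis
    by (simp add: complex_norm_square mult.commute del: of_real_power)
qed

lemma Re_det_Gap: "Re (det Gap) = (\<Prod>i<Nt. (cmod (Lap $$ (i,i)))\<^sup>2)"
  by (simp only: det_Gap Re_complex_of_real)

lemma Re_det_Gap_pos: "Re (det Gap) > 0"
  unfolding Re_det_Gap using Lap_diag by (intro prod_pos) auto

lemma trace_Lap_minv_Mreg: "mat_trace (Lap * (minv Mreg * mat_adjoint Lap)) = of_real (real Nt / N0)"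
proof -
  let ?W = "W_ap La Nt \<nu>"
  have W: "?W \<in> carrier_mat Nt Nt" by (rule carrier_W_ap[OF \<nu> det_lr_block_La])
  have "Lap * (minv Mreg * mat_adjoint Lap) = ?W * (La * (minv Mreg * (mat_adjoint La * mat_adjoint ?W)))"
    using W by (simp add: Lap_def L_ap_def mat_adjoint_mult_dims assoc_mult_mat_dims)
  also have "\<dots> = complex_of_real (1 / N0) \<cdot>\<^sub>m (?W * mat_adjoint ?W)"
    using W by (simp add: La_minv_Mreg mult_smult_distrib_dims)
  finally have "mat_trace (Lap * (minv Mreg * mat_adjoint Lap))
      = complex_of_real (1 / N0) * mat_trace (?W * mat_adjoint ?W)"
    using W by (simp add: mat_trace_smult[of _ Nt])
  then show ?thesis
    using \<nu> det_lr_block_La by (simp add: trace_W_ap_mult_adjoint)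
qed

lemma dims_ap[simp]:
  "dim_row Gap = Nt" "dim_col Gap = Nt" "dim_row Fap = Nr" "dim_col Fap = Nt"
  "dim_row Kap = Nt" "dim_col Kap = Nr"
  by (simp_all add: Gap_def Fap_def Kap_def)

lemma carriers_ap:
  "Gap \<in> carrier_mat Nt Nt" "Fap \<in> carrier_mat Nr Nt" "Kap \<in> carrier_mat Nt Nr"
  "Wmmse \<in> carrier_mat Nt Nr"
  by (auto intro: carrier_matI)

lemma trace_residual:
  "Re (mat_trace (mat_adjoint (Lap - Kap * H) * (Lap - Kap * H)))
    = Re (mat_trace Gap) - 2 * Re (mat_trace (mat_adjoint H * Fap))
      + Re (mat_trace (mat_adjoint (Kap * H) * (Kap * H)))"
proof -
  have "mat_adjoint (Kap * H) * Lap = mat_adjoint H * Fap"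
    by (simp add: Kap_def Fap_def Gap_def mat_adjoint_mult_dims assoc_mult_mat_dims)
  then show ?thesis
    using Re_mat_trace_adjoint_diff[OF carrier_Lap, of "Kap * H"]
    by (simp add: Gap_def carrier_matI)
qed

lemma expected_whitened_error:
  "Es * Re (mat_trace (mat_adjoint (Lap - Kap * H) * (Lap - Kap * H)))
    + N0 * Re (mat_trace (mat_adjoint Kap * Kap)) = real Nt"
proof -
  let ?E = "1\<^sub>m Nt - Wmmse * H"
  have E: "?E \<in> carrier_mat Nt Nt"
    using minus_carrier_mat[OF mult_carrier_mat[OF carriers_ap(4) H]] by simp
  have WW: "Wmmse * mat_adjoint Wmmse \<in> carrier_mat Nt Nt" by (auto intro: carrier_matI)
  have "Lap * ?E = Lap * 1\<^sub>m Nt - Lap * (Wmmse * H)"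
    using mult_minus_distrib_mat[OF carrier_Lap one_carrier_mat mult_carrier_mat[OF carriers_ap(4) H]] .
  then have residual: "Lap - Kap * H = Lap * ?E"
    by (simp add: Kap_def assoc_mult_mat_dims)
  have "complex_of_real Es * mat_trace (mat_adjoint (Lap - Kap * H) * (Lap - Kap * H))
      + complex_of_real N0 * mat_trace (mat_adjoint Kap * Kap)
      = mat_trace (Lap * ((complex_of_real Es \<cdot>\<^sub>m (?E * mat_adjoint ?E)
          + complex_of_real N0 \<cdot>\<^sub>m (Wmmse * mat_adjoint Wmmse)) * mat_adjoint Lap))"
    unfolding residual mat_trace_sandwich_lincomb[OF carrier_Lap mult_carrier_mat[OF E carrier_mat_adjoint[OF E]] WW]
    using E carriers_ap carrier_Lap by (simp add: mat_trace_gram_mult Kap_def)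
  also have "\<dots> = complex_of_real N0 * mat_trace (Lap * (minv Mreg * mat_adjoint Lap))"
    using Mreg_inverse(1) carrier_Lap
    by (simp add: mmse_error_covariance mult_smult_assoc_mat_dims mult_smult_distrib_dims mat_trace_smult[of _ Nt])
  also have "\<dots> = of_nat Nt"
    using N0 by (simp add: trace_Lap_minv_Mreg)
  finally have "Re (complex_of_real Es * mat_trace (mat_adjoint (Lap - Kap * H) * (Lap - Kap * H))
      + complex_of_real N0 * mat_trace (mat_adjoint Kap * Kap)) = Re (of_nat Nt)"
    by (rule arg_cong)
  then show ?thesis by simp
qed

lemma cscalar_prod_Fap:
  assumes y: "y \<in> carrier_vec Nr" and x: "x \<in> carrier_vec Nt"
  shows "conjugate y \<bullet> (Fap *\<^sub>v x) = conjugate (Kap *\<^sub>v y) \<bullet> (Lap *\<^sub>v x)"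
proof -
  note W = carriers_ap(4) and L = carrier_Lap
  note Lx = mult_mat_vec_carrier[OF L x]
  note L'Lx = mult_mat_vec_carrier[OF carrier_mat_adjoint[OF L] Lx]
  note Wy = mult_mat_vec_carrier[OF W y]
  have "Fap *\<^sub>v x = mat_adjoint Wmmse *\<^sub>v (mat_adjoint Lap *\<^sub>v (Lap *\<^sub>v x))"
    unfolding Fap_def Gap_def
    using assoc_mult_mat_vec[OF carrier_mat_adjoint[OF W] mult_carrier_mat[OF carrier_mat_adjoint[OF L] L] x]
      assoc_mult_mat_vec[OF carrier_mat_adjoint[OF L] L x] by simp
  then have "conjugate y \<bullet> (Fap *\<^sub>v x) = conjugate (Lap *\<^sub>v (Wmmse *\<^sub>v y)) \<bullet> (Lap *\<^sub>v x)"
    by (simp add: cscalar_prod_mult_mat_vec[OF W y L'Lx] cscalar_prod_mult_mat_vec[OF L Wy Lx])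
  also have "Lap *\<^sub>v (Wmmse *\<^sub>v y) = Kap *\<^sub>v y"
    unfolding Kap_def using assoc_mult_mat_vec[OF L W y] by simp
  finally show ?thesis .
qed

lemma p_ap_cond_mult_density:
  assumes y: "y \<in> carrier_vec Nr"
  shows "p_ap_cond Fap Gap Es y (vec Nt x) * cgauss_density Nt Es x
    = exp (sq_norm_cvec (Kap *\<^sub>v y)) / (pi * Es) ^ Nt
      * exp (- sq_norm_cvec (Lap *\<^sub>v vec Nt x - Kap *\<^sub>v y))"
proof -
  let ?x = "vec Nt x"
  define a where "a = Re (conjugate (Kap *\<^sub>v y) \<bullet> (Lap *\<^sub>v ?x))"
  define g where "g = sq_norm_cvec (Lap *\<^sub>v ?x)"
  define k where "k = sq_norm_cvec (Kap *\<^sub>v y)"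
  define S where "S = (\<Sum>i<Nt. (cmod (x i))\<^sup>2)"
  note x = vec_carrier[of Nt x]
  have "Re (conjugate ?x \<bullet> (Gap *\<^sub>v ?x)) = g"
    using sq_norm_cvec_mult_mat_vec[OF carrier_Lap x] by (simp add: Gap_def g_def)
  moreover have "Re (conjugate ?x \<bullet> ?x) = S"
    by (simp add: sq_norm_cvec_eq_Re[symmetric] sq_norm_cvec_def S_def)
  ultimately have "p_ap_cond Fap Gap Es y ?x * cgauss_density Nt Es x
      = exp (2 * a - g + S / Es) * (exp (- S / Es) / (pi * Es) ^ Nt)"
    by (simp add: p_ap_cond_def cgauss_density_def cscalar_prod_Fap[OF y x] a_def S_def)
  also have "\<dots> = exp k / (pi * Es) ^ Nt * exp (- (g - 2 * a + k))"
    by (simp add: exp_add[symmetric])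
  also have "g - 2 * a + k = sq_norm_cvec (Lap *\<^sub>v ?x - Kap *\<^sub>v y)"
    using sq_norm_cvec_minus[OF mult_mat_vec_carrier[OF carrier_Lap x] mult_mat_vec_carrier[OF carriers_ap(3) y]]
    by (simp add: a_def g_def k_def)
  finally show ?thesis by (simp add: k_def)
qed

lemma p_ap_marg_eq:
  assumes y: "y \<in> carrier_vec Nr"
  shows "p_ap_marg Fap Gap Es Nt y = exp (sq_norm_cvec (Kap *\<^sub>v y)) / (Es ^ Nt * Re (det Gap))"
proof -
  note Ky = mult_mat_vec_carrier[OF carriers_ap(3) y]
  have "p_ap_marg Fap Gap Es Nt y = exp (sq_norm_cvec (Kap *\<^sub>v y)) / (pi * Es) ^ Nt
      * (\<integral>x. exp (- sq_norm_cvec (Lap *\<^sub>v vec Nt x - Kap *\<^sub>v y)) \<partial>cvec_measure Nt)"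
    by (simp add: p_ap_marg_def p_ap_cond_mult_density[OF y])
  also have "\<dots> = exp (sq_norm_cvec (Kap *\<^sub>v y)) / (pi * Es) ^ Nt * (pi ^ Nt / Re (det Gap))"
    by (simp add: integral_exp_lower_triangular[OF carrier_Lap Ky Lap_lower Lap_diag] Re_det_Gap)
  also have "\<dots> = exp (sq_norm_cvec (Kap *\<^sub>v y)) / (Es ^ Nt * Re (det Gap))"
    using Es by (simp add: power_mult_distrib)
  finally show ?thesis .
qed

lemma ln_p_ap_marg:
  "y \<in> carrier_vec Nr \<Longrightarrow>
    ln (p_ap_marg Fap Gap Es Nt y) = sq_norm_cvec (Kap *\<^sub>v y) - (real Nt * ln Es + ln (Re (det Gap)))"
  using Es Re_det_Gap_pos by (simp add: p_ap_marg_eq ln_div ln_mult ln_realpow)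

lemma expected_ln_p_ap_cond_noise:
  "(\<integral>z. ln (p_ap_cond Fap Gap Es (H *\<^sub>v vec Nt x + vec Nr z) (vec Nt x)) * cgauss_density Nr N0 z
      \<partial>cvec_measure Nr)
    = ln (p_ap_cond Fap Gap Es (H *\<^sub>v vec Nt x) (vec Nt x))"
proof -
  let ?x = "vec Nt x" and ?f = "Fap *\<^sub>v vec Nt x"
  note Hx = mult_mat_vec_carrier[OF H vec_carrier[of Nt x]]
  note f = mult_mat_vec_carrier[OF carriers_ap(2) vec_carrier[of Nt x]]
  have linear: "ln (p_ap_cond Fap Gap Es (H *\<^sub>v ?x + vec Nr z) ?x)
      = Re (conjugate (vec Nr z) \<bullet> (0\<^sub>m Nr Nr *\<^sub>v vec Nr z) + conjugate (vec Nr z) \<bullet> (2 \<cdot>\<^sub>v ?f)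
        + complex_of_real (ln (p_ap_cond Fap Gap Es (H *\<^sub>v ?x) ?x)))" for z
  proof -
    have "conjugate (H *\<^sub>v ?x + vec Nr z) \<bullet> ?f = conjugate (H *\<^sub>v ?x) \<bullet> ?f + conjugate (vec Nr z) \<bullet> ?f"
      unfolding conjugate_add_vec[OF Hx vec_carrier]
      by (rule add_scalar_prod_distrib[OF carrier_vec_conjugate[OF Hx] carrier_vec_conjugate[OF vec_carrier] f])
    moreover have "conjugate (vec Nr z) \<bullet> (0\<^sub>m Nr Nr *\<^sub>v vec Nr z) = 0"
      by (simp add: scalar_prod_def)
    moreover have "conjugate (vec Nr z) \<bullet> (2 \<cdot>\<^sub>v ?f) = 2 * (conjugate (vec Nr z) \<bullet> ?f)"
      using f by simp
    ultimately show ?thesis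
      unfolding ln_p_ap_cond by simp
  qed
  have "has_bochner_integral (cvec_measure Nr)
      (\<lambda>z. Re (conjugate (vec Nr z) \<bullet> (0\<^sub>m Nr Nr *\<^sub>v vec Nr z) + conjugate (vec Nr z) \<bullet> (2 \<cdot>\<^sub>v ?f)
        + complex_of_real (ln (p_ap_cond Fap Gap Es (H *\<^sub>v ?x) ?x))) * cgauss_density Nr N0 z)
      (N0 * Re (mat_trace (0\<^sub>m Nr Nr)) + Re (complex_of_real (ln (p_ap_cond Fap Gap Es (H *\<^sub>v ?x) ?x))))"
    using f by (intro has_bochner_integral_cgauss_quadratic N0) auto
  then show ?thesis
    unfolding linear[symmetric] by (simp add: has_bochner_integral_integral_eq mat_trace_def)
qed

lemma expected_ln_p_ap_cond:
  "(\<integral>x. ln (p_ap_cond Fap Gap Es (H *\<^sub>v vec Nt x) (vec Nt x)) * cgauss_density Nt Es x \<partial>cvec_measure Nt)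
    = Es * (2 * Re (mat_trace (mat_adjoint H * Fap)) - Re (mat_trace Gap)) + real Nt"
proof -
  let ?q = "\<lambda>A x. Re (conjugate (vec Nt x) \<bullet> (A *\<^sub>v vec Nt x)) * cgauss_density Nt Es x"
  have HF: "mat_adjoint H * Fap \<in> carrier_mat Nt Nt"
    using mult_carrier_mat[OF carrier_mat_adjoint[OF H] carriers_ap(2)] .
  have integrand: "ln (p_ap_cond Fap Gap Es (H *\<^sub>v vec Nt x) (vec Nt x)) * cgauss_density Nt Es x
      = 2 * ?q (mat_adjoint H * Fap) x - ?q Gap x + ?q (1\<^sub>m Nt) x / Es" for x
  proof -
    note f = mult_mat_vec_carrier[OF carriers_ap(2) vec_carrier[of Nt x]]
    have "conjugate (H *\<^sub>v vec Nt x) \<bullet> (Fap *\<^sub>v vec Nt x)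
        = conjugate (vec Nt x) \<bullet> ((mat_adjoint H * Fap) *\<^sub>v vec Nt x)"
      unfolding cscalar_prod_mult_mat_vec[OF H vec_carrier f]
      using assoc_mult_mat_vec[OF carrier_mat_adjoint[OF H] carriers_ap(2) vec_carrier[of Nt x]] by simp
    then show ?thesis
      unfolding ln_p_ap_cond by (simp add: algebra_simps)
  qed
  have "has_bochner_integral (cvec_measure Nt)
      (\<lambda>x. 2 * ?q (mat_adjoint H * Fap) x - ?q Gap x + ?q (1\<^sub>m Nt) x / Es)
      (2 * (Es * Re (mat_trace (mat_adjoint H * Fap))) - Es * Re (mat_trace Gap)
        + Es * Re (mat_trace (1\<^sub>m Nt :: complex mat)) / Es)"
    using carriers_ap(1) HF
    by (intro has_bochner_integral_add has_bochner_integral_diff has_bochner_integral_mult_right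
        has_bochner_integral_divide_zero has_bochner_integral_cgauss_hermitian_form Es) auto
  then show ?thesis
    unfolding integrand using Es by (simp add: has_bochner_integral_integral_eq algebra_simps)
qed

lemma expected_ln_p_ap_marg_noise:
  "(\<integral>z. ln (p_ap_marg Fap Gap Es Nt (H *\<^sub>v vec Nt x + vec Nr z)) * cgauss_density Nr N0 z
      \<partial>cvec_measure Nr)
    = ln (p_ap_marg Fap Gap Es Nt (H *\<^sub>v vec Nt x)) + N0 * Re (mat_trace (mat_adjoint Kap * Kap))"
proof -
  let ?x = "vec Nt x"
  note K = carriers_ap(3)
  note Hx = mult_mat_vec_carrier[OF H vec_carrier[of Nt x]]
  note u = mult_mat_vec_carrier[OF K Hx]
  have KK: "mat_adjoint Kap * Kap \<in> carrier_mat Nr Nr"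
    using mult_carrier_mat[OF carrier_mat_adjoint[OF K] K] .
  have c: "2 \<cdot>\<^sub>v (mat_adjoint Kap *\<^sub>v (Kap *\<^sub>v (H *\<^sub>v ?x))) \<in> carrier_vec Nr"
    using mult_mat_vec_carrier[OF carrier_mat_adjoint[OF K] u] by simp
  have quadratic: "ln (p_ap_marg Fap Gap Es Nt (H *\<^sub>v ?x + vec Nr z))
      = Re (conjugate (vec Nr z) \<bullet> ((mat_adjoint Kap * Kap) *\<^sub>v vec Nr z)
        + conjugate (vec Nr z) \<bullet> (2 \<cdot>\<^sub>v (mat_adjoint Kap *\<^sub>v (Kap *\<^sub>v (H *\<^sub>v ?x))))
        + complex_of_real (ln (p_ap_marg Fap Gap Es Nt (H *\<^sub>v ?x))))" for z
  proof -
    note z = vec_carrier[of Nr z]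
    note w = mult_mat_vec_carrier[OF K z]
    have "sq_norm_cvec (Kap *\<^sub>v (H *\<^sub>v ?x + vec Nr z))
        = sq_norm_cvec (Kap *\<^sub>v (H *\<^sub>v ?x))
          + 2 * Re (conjugate (vec Nr z) \<bullet> (mat_adjoint Kap *\<^sub>v (Kap *\<^sub>v (H *\<^sub>v ?x))))
          + Re (conjugate (vec Nr z) \<bullet> ((mat_adjoint Kap * Kap) *\<^sub>v vec Nr z))"
      unfolding mult_add_distrib_mat_vec[OF K Hx z] sq_norm_cvec_add[OF u w]
        cscalar_prod_mult_mat_vec[OF K z u] sq_norm_cvec_mult_mat_vec[OF K z] ..
    then show ?thesis
      using mult_mat_vec_carrier[OF carrier_mat_adjoint[OF K] u]
      by (simp add: ln_p_ap_marg add_carrier_vec[OF Hx z] ln_p_ap_marg[OF Hx])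
  qed
  have "has_bochner_integral (cvec_measure Nr)
      (\<lambda>z. Re (conjugate (vec Nr z) \<bullet> ((mat_adjoint Kap * Kap) *\<^sub>v vec Nr z)
        + conjugate (vec Nr z) \<bullet> (2 \<cdot>\<^sub>v (mat_adjoint Kap *\<^sub>v (Kap *\<^sub>v (H *\<^sub>v ?x))))
        + complex_of_real (ln (p_ap_marg Fap Gap Es Nt (H *\<^sub>v ?x)))) * cgauss_density Nr N0 z)
      (N0 * Re (mat_trace (mat_adjoint Kap * Kap)) + Re (complex_of_real (ln (p_ap_marg Fap Gap Es Nt (H *\<^sub>v ?x)))))"
    by (rule has_bochner_integral_cgauss_quadratic[OF N0 KK c])
  then show ?thesis
    unfolding quadratic[symmetric] by (simp add: has_bochner_integral_integral_eq)
qed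

lemma expected_ln_p_ap_marg:
  "(\<integral>x. (ln (p_ap_marg Fap Gap Es Nt (H *\<^sub>v vec Nt x)) + N0 * Re (mat_trace (mat_adjoint Kap * Kap)))
      * cgauss_density Nt Es x \<partial>cvec_measure Nt)
    = Es * Re (mat_trace (mat_adjoint (Kap * H) * (Kap * H))) + N0 * Re (mat_trace (mat_adjoint Kap * Kap))
      - (real Nt * ln Es + ln (Re (det Gap)))"
proof -
  let ?d = "N0 * Re (mat_trace (mat_adjoint Kap * Kap)) - (real Nt * ln Es + ln (Re (det Gap)))"
  have KH: "Kap * H \<in> carrier_mat Nt Nt" using mult_carrier_mat[OF carriers_ap(3) H] .
  have quadratic: "ln (p_ap_marg Fap Gap Es Nt (H *\<^sub>v vec Nt x)) + N0 * Re (mat_trace (mat_adjoint Kap * Kap))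
      = Re (conjugate (vec Nt x) \<bullet> ((mat_adjoint (Kap * H) * (Kap * H)) *\<^sub>v vec Nt x)
        + conjugate (vec Nt x) \<bullet> 0\<^sub>v Nt + complex_of_real ?d)" for x
  proof -
    have "sq_norm_cvec (Kap *\<^sub>v (H *\<^sub>v vec Nt x))
        = Re (conjugate (vec Nt x) \<bullet> ((mat_adjoint (Kap * H) * (Kap * H)) *\<^sub>v vec Nt x))"
      unfolding assoc_mult_mat_vec[OF carriers_ap(3) H vec_carrier, symmetric]
      by (rule sq_norm_cvec_mult_mat_vec[OF KH vec_carrier])
    then show ?thesis
      by (simp add: ln_p_ap_marg[OF mult_mat_vec_carrier[OF H vec_carrier]])
  qed
  have "has_bochner_integral (cvec_measure Nt)
      (\<lambda>x. Re (conjugate (vec Nt x) \<bullet> ((mat_adjoint (Kap * H) * (Kap * H)) *\<^sub>v vec Nt x)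
        + conjugate (vec Nt x) \<bullet> 0\<^sub>v Nt + complex_of_real ?d) * cgauss_density Nt Es x)
      (Es * Re (mat_trace (mat_adjoint (Kap * H) * (Kap * H))) + Re (complex_of_real ?d))"
    by (rule has_bochner_integral_cgauss_quadratic[OF Es mult_carrier_mat[OF carrier_mat_adjoint[OF KH] KH]
        zero_carrier_vec])
  then show ?thesis
    unfolding quadratic[symmetric] by (simp add: has_bochner_integral_integral_eq)
qed

lemma information_rate_lower_bound:
  "(\<integral>x. (\<integral>z. ln (p_ap_cond Fap Gap Es (H *\<^sub>v vec Nt x + vec Nr z) (vec Nt x))
          * cgauss_density Nr N0 z \<partial>cvec_measure Nr) * cgauss_density Nt Es x \<partial>cvec_measure Nt)
    - (\<integral>x. (\<integral>z. ln (p_ap_marg Fap Gap Es Nt (H *\<^sub>v vec Nt x + vec Nr z))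
          * cgauss_density Nr N0 z \<partial>cvec_measure Nr) * cgauss_density Nt Es x \<partial>cvec_measure Nt)
    = real Nt * ln Es + ln (Re (det Gap))"
  unfolding expected_ln_p_ap_cond_noise expected_ln_p_ap_marg_noise
    expected_ln_p_ap_cond expected_ln_p_ap_marg
  using expected_whitened_error unfolding trace_residual by (simp add: algebra_simps)

end

theorem theorem2:
  fixes Nr Nt \<nu> :: nat and H Qa La :: "complex mat" and Es N0 :: real
  assumes "2 \<le> Nt" and "Nt \<le> Nr"
    and "H \<in> carrier_mat Nr Nt"
    and "Es > 0" and "N0 > 0"
    and "Qa \<in> carrier_mat (Nr + Nt) Nt" and "mat_adjoint Qa * Qa = 1\<^sub>m Nt"
    and "La \<in> carrier_mat Nt Nt"
    and "\<forall>i<Nt. \<forall>j<Nt. i < j \<longrightarrow> La $$ (i,j) = 0"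
    and "\<forall>i<Nt. Im (La $$ (i,i)) = 0 \<and> Re (La $$ (i,i)) > 0"
    and "aug_mat H N0 Es Nr Nt = Qa * La"
    and "1 \<le> \<nu>" and "\<nu> \<le> Nt - 1"
  shows
    "(let Lap = L_ap La Nt \<nu>;
          G = mat_adjoint Lap * Lap;
          F = mat_adjoint (W_MMSE H (N0 / Es) Nt) * G;
          yv = (\<lambda>x z. H *\<^sub>v vec Nt x + vec Nr z)
      in (\<integral>x. (\<integral>z. ln (p_ap_cond F G Es (yv x z) (vec Nt x))
                     * cgauss_density Nr N0 z \<partial>cvec_measure Nr)
                * cgauss_density Nt Es x \<partial>cvec_measure Nt)
       - (\<integral>x. (\<integral>z. ln (p_ap_marg F G Es Nt (yv x z))
                     * cgauss_density Nr N0 z \<partial>cvec_measure Nr)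
                * cgauss_density Nt Es x \<partial>cvec_measure Nt)
       = real Nt * ln Es + ln (Re (det G)))"
proof -
  interpret awld_setting Nr Nt \<nu> H Qa La Es N0
    using assms by unfold_locales (auto simp: complex_eq_iff)
  show ?thesis
    using information_rate_lower_bound by (simp add: Let_def Lap_def Gap_def Fap_def Wmmse_def)
qed

end
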